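(* Let $(M,S)$ be a covered map where $M$ is bipartite, and let $(M,(I,O))=\Delta(M,S)$. The orientation $(I,O)$ is the geodesic orientation of $M$ if and only if $M_{|S}$ is the rightmost BFS tree of $M$.
   Context: Permutations compose right to left. A map is $M=(H,\sigma,\alpha)$, $H$ finite, $\alpha$ fixed-point-free involution, $\sigma$ permutation (its cycles give the counterclockwise order of half-edges around each vertex), $\langle\sigma,\alpha\rangle$ transitive, root $r\in H$; $\phi=\sigma\alpha$. $\pi_{|S}$ is obtained from the cycles of $\pi$ by erasing elements not in $S$. A covered map is $(M,S)$ with $S$ stable by $\alpha$ and $M_{|S}=(S,\sigma_{|S},\alpha_{|S})$ a connecting unicellular map ($\sigma_{|S},\alpha_{|S}$ transitive on $S$, $S$ meets every cycle of $\sigma$ — $S=\emptyset$ allowed if $\sigma$ has one cycle — and $\sigma_{|S}\alpha_{|S}$ cyclic). The motion function $\theta(h)=\sigma\alpha(h)$ ($h\in S$), $\sigma(h)$ ($h\notin S$) is cyclic and gives the order $r\prec_S\theta(r)\prec_S\cdots\prec_S\theta^{|H|-1}(r)$. $\Delta(M,S)=(M,(I,O))$ with $I=\{h\in S:\alpha(h)\prec_S h\}\cup\{h\notin S:h\prec_S\alpha(h)\}$, $O=H\setminus I$; an edge is oriented from the vertex of its half-edge in $O$ to the vertex of its half-edge in $I$. Let $d(v)$ be the graph distance from the root-vertex (vertex containing $r$). In a bipartite map adjacent vertices $u,v$ satisfy $|d(u)-d(v)|=1$; the geodesic orientation orients each edge from its endpoint with smaller $d$ to its endpoint with larger $d$ (so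 the ingoing half-edge is the one at the vertex with larger $d$). The rightmost BFS tree $T$ is built as follows: initially all vertices are alive and $T$ consists of the root-vertex only; repeatedly, take the alive vertex $v$ that has been in $T$ for the longest time, declare it dead, and inspect its half-edges in the counterclockwise order given by $\sigma$ — starting from $r$ if $v$ is the root-vertex, and otherwise starting from the half-edge following (under $\sigma$) the half-edge of $v$ on the tree edge joining $v$ to its parent — and whenever an inspected half-edge $h$ leads (via $\alpha(h)$) to a vertex not yet in $T$, add that vertex and the edge $\{h,\alpha(h)\}$ to $T$; stop when all vertices are dead. $M_{|S}$ being the rightmost BFS tree means $S$ is the set of half-edges of the edges of $T$. *)

theory Defs
  imports Main "HOL-Combinatorics.Permutations"
begin

definition cyclic_on :: "('a \<Rightarrow> 'a) \<Rightarrow> 'a set \<Rightarrow> bool" where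
  "cyclic_on \<pi> S \<longleftrightarrow> (\<forall>x\<in>S. \<forall>y\<in>S. \<exists>k. (\<pi>^^k) x = y)"

text \<open>The group generated by two permutations acts transitively on S
  (for permutations of a finite set, reachability by forward steps suffices).\<close>
definition transitive_on :: "('a \<Rightarrow> 'a) \<Rightarrow> ('a \<Rightarrow> 'a) \<Rightarrow> 'a set \<Rightarrow> bool" where
  "transitive_on \<sigma> \<alpha> S \<longleftrightarrow>
     (\<forall>x\<in>S. \<forall>y\<in>S. (x, y) \<in> ({(z, \<sigma> z) | z. z \<in> S} \<union> {(z, \<alpha> z) | z. z \<in> S})\<^sup>*)"

definition is_map :: "'a set \<Rightarrow> ('a \<Rightarrow> 'a) \<Rightarrow> ('a \<Rightarrow> 'a) \<Rightarrow> 'a \<Rightarrow> bool" where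
  "is_map H \<sigma> \<alpha> r \<longleftrightarrow> finite H \<and> \<sigma> permutes H \<and> \<alpha> permutes H \<and>
     (\<forall>h\<in>H. \<alpha> (\<alpha> h) = h \<and> \<alpha> h \<noteq> h) \<and> transitive_on \<sigma> \<alpha> H \<and> r \<in> H"

text \<open>Restriction pi|S: erase from the cycles of pi the elements not in S.\<close>
definition restr :: "('a \<Rightarrow> 'a) \<Rightarrow> 'a set \<Rightarrow> 'a \<Rightarrow> 'a" where
  "restr \<pi> S h = (\<pi> ^^ (LEAST k. 0 < k \<and> (\<pi>^^k) h \<in> S)) h"

text \<open>Covered map (M,S): S stable by alpha and M|S a connecting unicellular map.\<close>
definition covered_map :: "'a set \<Rightarrow> ('a \<Rightarrow> 'a) \<Rightarrow> ('a \<Rightarrow> 'a) \<Rightarrow> 'a \<Rightarrow> 'a set \<Rightarrow> bool" where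
  "covered_map H \<sigma> \<alpha> r S \<longleftrightarrow> is_map H \<sigma> \<alpha> r \<and> S \<subseteq> H \<and> \<alpha> ` S = S \<and>
     transitive_on (restr \<sigma> S) (restr \<alpha> S) S \<and>
     ((\<forall>h\<in>H. \<exists>k. (\<sigma>^^k) h \<in> S) \<or> (S = {} \<and> cyclic_on \<sigma> H)) \<and>
     cyclic_on (restr \<sigma> S \<circ> restr \<alpha> S) S"

definition motion :: "('a \<Rightarrow> 'a) \<Rightarrow> ('a \<Rightarrow> 'a) \<Rightarrow> 'a set \<Rightarrow> 'a \<Rightarrow> 'a" where
  "motion \<sigma> \<alpha> S h = (if h \<in> S then \<sigma> (\<alpha> h) else \<sigma> h)"

definition motion_pos :: "('a \<Rightarrow> 'a) \<Rightarrow> ('a \<Rightarrow> 'a) \<Rightarrow> 'a \<Rightarrow> 'a set \<Rightarrow> 'a \<Rightarrow> nat" where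
  "motion_pos \<sigma> \<alpha> r S h = (LEAST k. (motion \<sigma> \<alpha> S ^^ k) r = h)"

text \<open>The ingoing half-edges I of Delta(M,S); O is H minus I.\<close>
definition Delta_in :: "'a set \<Rightarrow> ('a \<Rightarrow> 'a) \<Rightarrow> ('a \<Rightarrow> 'a) \<Rightarrow> 'a \<Rightarrow> 'a set \<Rightarrow> 'a set" where
  "Delta_in H \<sigma> \<alpha> r S =
     {h \<in> S. motion_pos \<sigma> \<alpha> r S (\<alpha> h) < motion_pos \<sigma> \<alpha> r S h} \<union>
     {h \<in> H - S. motion_pos \<sigma> \<alpha> r S h < motion_pos \<sigma> \<alpha> r S (\<alpha> h)}"

definition vertex_of :: "('a \<Rightarrow> 'a) \<Rightarrow> 'a \<Rightarrow> 'a set" where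
  "vertex_of \<sigma> h = {(\<sigma>^^k) h | k. True}"

fun reach :: "('a \<Rightarrow> 'a) \<Rightarrow> ('a \<Rightarrow> 'a) \<Rightarrow> 'a \<Rightarrow> nat \<Rightarrow> 'a \<Rightarrow> bool" where
  "reach \<sigma> \<alpha> r 0 h \<longleftrightarrow> h \<in> vertex_of \<sigma> r"
| "reach \<sigma> \<alpha> r (Suc n) h \<longleftrightarrow> reach \<sigma> \<alpha> r n h \<or>
      (\<exists>h'. reach \<sigma> \<alpha> r n h' \<and> h \<in> vertex_of \<sigma> (\<alpha> h'))"

definition vdist :: "('a \<Rightarrow> 'a) \<Rightarrow> ('a \<Rightarrow> 'a) \<Rightarrow> 'a \<Rightarrow> 'a \<Rightarrow> nat" where
  "vdist \<sigma> \<alpha> r h = (LEAST n. reach \<sigma> \<alpha> r n h)"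

definition bipartite_map :: "'a set \<Rightarrow> ('a \<Rightarrow> 'a) \<Rightarrow> ('a \<Rightarrow> 'a) \<Rightarrow> bool" where
  "bipartite_map H \<sigma> \<alpha> \<longleftrightarrow> (\<exists>c :: 'a \<Rightarrow> bool.
      (\<forall>h\<in>H. c (\<sigma> h) = c h) \<and> (\<forall>h\<in>H. c (\<alpha> h) \<noteq> c h))"

definition geodesic_in :: "'a set \<Rightarrow> ('a \<Rightarrow> 'a) \<Rightarrow> ('a \<Rightarrow> 'a) \<Rightarrow> 'a \<Rightarrow> 'a set" where
  "geodesic_in H \<sigma> \<alpha> r = {h \<in> H. vdist \<sigma> \<alpha> r (\<alpha> h) < vdist \<sigma> \<alpha> r h}"

text \<open>BFS state: (vertices in T, half-edges of edges of T, FIFO queue of alive vertices).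
  Each alive vertex is stored in the queue by the half-edge at which its inspection
  starts (r for the root vertex, otherwise sigma of the half-edge of the vertex on
  its parent edge).\<close>
type_synonym 'a bfs_state = "'a set set \<times> 'a set \<times> 'a list"

definition inspect :: "('a \<Rightarrow> 'a) \<Rightarrow> ('a \<Rightarrow> 'a) \<Rightarrow> 'a bfs_state \<Rightarrow> 'a \<Rightarrow> 'a bfs_state" where
  "inspect \<sigma> \<alpha> st h = (case st of (V, E, Q) \<Rightarrow>
     if vertex_of \<sigma> (\<alpha> h) \<notin> V
     then (insert (vertex_of \<sigma> (\<alpha> h)) V, E \<union> {h, \<alpha> h}, Q @ [\<sigma> (\<alpha> h)])
     else (V, E, Q))"

definition ccw_list :: "('a \<Rightarrow> 'a) \<Rightarrow> 'a \<Rightarrow> 'a list" where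
  "ccw_list \<sigma> s = map (\<lambda>i. (\<sigma>^^i) s) [0..<card (vertex_of \<sigma> s)]"

definition bfs_step :: "('a \<Rightarrow> 'a) \<Rightarrow> ('a \<Rightarrow> 'a) \<Rightarrow> 'a bfs_state \<Rightarrow> 'a bfs_state" where
  "bfs_step \<sigma> \<alpha> st = (case st of
      (V, E, []) \<Rightarrow> (V, E, [])
    | (V, E, s # Q) \<Rightarrow> foldl (inspect \<sigma> \<alpha>) (V, E, Q) (ccw_list \<sigma> s))"

text \<open>Half-edges of the rightmost BFS tree (each vertex is processed once, and there are
  at most card H vertices, so card H steps exhaust the queue).\<close>
definition rightmost_bfs_tree :: "'a set \<Rightarrow> ('a \<Rightarrow> 'a) \<Rightarrow> ('a \<Rightarrow> 'a) \<Rightarrow> 'a \<Rightarrow> 'a set" where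
  "rightmost_bfs_tree H \<sigma> \<alpha> r =
     fst (snd ((bfs_step \<sigma> \<alpha> ^^ card H) ({vertex_of \<sigma> r}, {}, [r])))"

end

theory Submission
  imports Defs
begin

text \<open>Order the half-edges by their position along the motion function \<theta>, starting at r.
  Both conditions of the theorem imply that every tree edge is first visited at its end closer
  to the root. Then \<theta> visits every vertex v other than the root vertex in one block: it enters
  v through the tree edge from its parent, turns once around v, and meanwhile only visits
  vertices farther from the root. Hence, level by level, the order of the blocks is the order in
  which the rightmost BFS discovers the vertices, and the tree edge into v is the \<theta>-first edge
  from the previous level. A geodesic orientation makes this \<theta>-first edge the one chosen by
  the BFS; conversely, in the BFS tree every non-tree edge is visited first at its end farther
  from the root, which is what a geodesic orientation requires.\<close>

section \<open>Cycles of a permutation\<close>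

definition period :: "('a \<Rightarrow> 'a) \<Rightarrow> 'a \<Rightarrow> nat" where
  "period f x = (LEAST n. 0 < n \<and> (f ^^ n) x = x)"

lemma funpow_in_closed: "g ` A \<subseteq> A \<Longrightarrow> a \<in> A \<Longrightarrow> (g ^^ i) a \<in> A"
  by (induction i) auto

lemma funpow_inj_on:
  assumes "inj_on g A" "g ` A \<subseteq> A" "a \<in> A" "b \<in> A" "(g ^^ i) a = (g ^^ i) b"
  shows "a = b"
  using assms(3-5)
proof (induction i arbitrary: a b)
  case (Suc i)
  have "(g ^^ i) a \<in> A" "(g ^^ i) b \<in> A"
    using funpow_in_closed[OF assms(2)] Suc.prems by auto
  with Suc.prems assms(1) have "(g ^^ i) a = (g ^^ i) b" by (auto dest: inj_onD)
  then show ?case using Suc by blast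
qed simp

lemma funpow_eq_funpow_pred: "0 < m \<Longrightarrow> (f ^^ m) x = (f ^^ (m - 1)) (f x)"
  by (cases m) (simp_all add: funpow_Suc_right del: funpow.simps)

lemma self_in_vertex_of: "x \<in> vertex_of f x"
  unfolding vertex_of_def by (auto intro: exI[of _ 0])

lemma funpow_in_vertex_of: "(f ^^ k) x \<in> vertex_of f x"
  unfolding vertex_of_def by auto

context
  fixes f :: "'a \<Rightarrow> 'a" and A :: "'a set"
  assumes permutes: "f permutes A" and finite: "finite A"
begin

lemma period_pos: "0 < period f x" and funpow_period: "(f ^^ period f x) x = x"
proof -
  have "permutation f" using permutes finite permutation_permutes by blast
  then obtain n where "0 < n \<and> (f ^^ n) x = x" using permutation_self by metis
  then have "0 < period f x \<and> (f ^^ period f x) x = x" unfolding period_def by (rule LeastI)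
  then show "0 < period f x" "(f ^^ period f x) x = x" by auto
qed

lemma funpow_inj_below_period:
  assumes "i < period f x" "j < period f x" "(f ^^ i) x = (f ^^ j) x"
  shows "i = j"
proof -
  have "(f ^^ (j - i)) x \<noteq> x" if "i < j" "j < period f x" for i j
    using that not_less_Least[of "j - i" "\<lambda>n. 0 < n \<and> (f ^^ n) x = x"]
    unfolding period_def by auto
  moreover have "(f ^^ (j - i)) x = x" if "i < j" "(f ^^ i) x = (f ^^ j) x" for i j
  proof -
    have "(f ^^ i) ((f ^^ (j - i)) x) = (f ^^ i) x"
      using that by (metis funpow_add comp_apply le_add_diff_inverse less_imp_le)
    then show ?thesis
      using inj_fn[OF permutes_inj[OF permutes], of i] by (simp add: inj_eq)
  qed
  ultimately show ?thesis using assms by (metis linorder_neqE_nat)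
qed

lemma vertex_of_conv_period: "vertex_of f x = (\<lambda>i. (f ^^ i) x) ` {..<period f x}"
proof
  show "vertex_of f x \<subseteq> (\<lambda>i. (f ^^ i) x) ` {..<period f x}"
  proof
    fix y assume "y \<in> vertex_of f x"
    then obtain k where "y = (f ^^ k) x" unfolding vertex_of_def by auto
    then have "y = (f ^^ (k mod period f x)) x" using funpow_mod_eq[OF funpow_period] by metis
    moreover have "k mod period f x < period f x" using period_pos by simp
    ultimately show "y \<in> (\<lambda>i. (f ^^ i) x) ` {..<period f x}" by blast
  qed
qed (auto simp: vertex_of_def)

lemma card_vertex_of: "card (vertex_of f x) = period f x"
proof -
  have "inj_on (\<lambda>i. (f ^^ i) x) {..<period f x}"
    by (rule inj_onI) (use funpow_inj_below_period in auto)
  then show ?thesis by (simp add: vertex_of_conv_period card_image)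
qed

lemma card_vertex_of_pos: "0 < card (vertex_of f x)"
  using card_vertex_of period_pos by simp

lemma funpow_card_vertex_of: "(f ^^ card (vertex_of f x)) x = x"
  using card_vertex_of funpow_period by simp

lemma funpow_inj_below_card_vertex_of:
  "i < card (vertex_of f x) \<Longrightarrow> j < card (vertex_of f x) \<Longrightarrow> (f ^^ i) x = (f ^^ j) x \<Longrightarrow> i = j"
  using card_vertex_of funpow_inj_below_period by simp

lemma vertex_of_index: "y \<in> vertex_of f x \<Longrightarrow> \<exists>i<card (vertex_of f x). y = (f ^^ i) x"
  using vertex_of_conv_period card_vertex_of by auto

lemma vertex_of_eq: "y \<in> vertex_of f x \<Longrightarrow> vertex_of f y = vertex_of f x"
proof -
  have sub: "vertex_of f y \<subseteq> vertex_of f x" if "y \<in> vertex_of f x" for x y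
    using that unfolding vertex_of_def by (auto, metis funpow_add comp_apply)
  assume y: "y \<in> vertex_of f x"
  then obtain k where k: "k < card (vertex_of f x)" "y = (f ^^ k) x" using vertex_of_index by blast
  have "(f ^^ (card (vertex_of f x) - k)) y = (f ^^ card (vertex_of f x)) x"
    using k by (metis funpow_add comp_apply le_add_diff_inverse2 less_imp_le)
  then have "x \<in> vertex_of f y" using funpow_card_vertex_of funpow_in_vertex_of by metis
  then show ?thesis using sub y by blast
qed

lemma f_in_vertex_of_iff: "f y \<in> vertex_of f x \<longleftrightarrow> y \<in> vertex_of f x"
proof -
  have "vertex_of f (f y) = vertex_of f y"
    using vertex_of_eq funpow_in_vertex_of[where k = 1 and x = y] by simp
  then show ?thesis using vertex_of_eq self_in_vertex_of by metis
qed

lemma vertex_of_subset: "x \<in> A \<Longrightarrow> vertex_of f x \<subseteq> A"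
  unfolding vertex_of_def using permutes_in_funpow_image[OF permutes] by auto

end

section \<open>Bipartite covered maps: vertices and distances\<close>

locale bipartite_covered_map =
  fixes H :: "'a set" and \<sigma> \<alpha> :: "'a \<Rightarrow> 'a" and r :: 'a and S :: "'a set"
  assumes covered: "covered_map H \<sigma> \<alpha> r S" and bipartite: "bipartite_map H \<sigma> \<alpha>"
begin

lemma finite_H: "finite H" and sigma_permutes: "\<sigma> permutes H" and alpha_permutes: "\<alpha> permutes H"
  and alpha_alpha: "h \<in> H \<Longrightarrow> \<alpha> (\<alpha> h) = h" and alpha_neq: "h \<in> H \<Longrightarrow> \<alpha> h \<noteq> h"
  and transitive_H: "transitive_on \<sigma> \<alpha> H" and r_in_H: "r \<in> H" and S_subset_H: "S \<subseteq> H"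
  and alpha_S_eq: "\<alpha> ` S = S"
  and S_connecting: "(\<forall>h\<in>H. \<exists>k. (\<sigma> ^^ k) h \<in> S) \<or> (S = {} \<and> cyclic_on \<sigma> H)"
  and phi_cyclic_on_S: "cyclic_on (restr \<sigma> S \<circ> restr \<alpha> S) S"
  using covered unfolding covered_map_def is_map_def by auto

lemma alpha_in_S: "x \<in> S \<Longrightarrow> \<alpha> x \<in> S" using alpha_S_eq by auto
lemma alpha_in_H: "x \<in> H \<Longrightarrow> \<alpha> x \<in> H" using alpha_permutes by (simp add: permutes_in_image)
lemma sigma_in_H: "x \<in> H \<Longrightarrow> \<sigma> x \<in> H" using sigma_permutes by (simp add: permutes_in_image)
lemma sigma_funpow_in_H: "x \<in> H \<Longrightarrow> (\<sigma> ^^ k) x \<in> H"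
  using sigma_permutes by (simp add: permutes_in_funpow_image)

abbreviation vertex where "vertex h \<equiv> vertex_of \<sigma> h"
abbreviation deg where "deg h \<equiv> card (vertex h)"

lemma deg_pos: "0 < deg h" by (rule card_vertex_of_pos[OF sigma_permutes finite_H])
lemma sigma_funpow_deg: "(\<sigma> ^^ deg h) h = h" by (rule funpow_card_vertex_of[OF sigma_permutes finite_H])
lemma sigma_funpow_inj_below_deg: "i < deg h \<Longrightarrow> j < deg h \<Longrightarrow> (\<sigma> ^^ i) h = (\<sigma> ^^ j) h \<Longrightarrow> i = j"
  by (rule funpow_inj_below_card_vertex_of[OF sigma_permutes finite_H])
lemma vertex_index: "g \<in> vertex h \<Longrightarrow> \<exists>i<deg h. g = (\<sigma> ^^ i) h"
  by (rule vertex_of_index[OF sigma_permutes finite_H])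
lemma in_own_vertex: "h \<in> vertex h" by (rule self_in_vertex_of)
lemma sigma_funpow_in_vertex: "(\<sigma> ^^ k) h \<in> vertex h" by (rule funpow_in_vertex_of)
lemma vertex_eq: "g \<in> vertex h \<Longrightarrow> vertex g = vertex h" by (rule vertex_of_eq[OF sigma_permutes finite_H])
lemma vertex_sym: "g \<in> vertex h \<Longrightarrow> h \<in> vertex g" using vertex_eq in_own_vertex by metis
lemma vertex_trans: "g \<in> vertex h \<Longrightarrow> x \<in> vertex g \<Longrightarrow> x \<in> vertex h" using vertex_eq by metis
lemma sigma_in_vertex_iff: "\<sigma> g \<in> vertex h \<longleftrightarrow> g \<in> vertex h"
  by (rule f_in_vertex_of_iff[OF sigma_permutes finite_H])
lemma sigma_in_own_vertex: "\<sigma> g \<in> vertex g" using sigma_in_vertex_iff in_own_vertex by blast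
lemma in_vertex_in_H: "h \<in> H \<Longrightarrow> g \<in> vertex h \<Longrightarrow> g \<in> H"
  using vertex_of_subset[OF sigma_permutes finite_H] by blast
lemma deg_le_card_H: "h \<in> H \<Longrightarrow> deg h \<le> card H"
  using vertex_of_subset[OF sigma_permutes finite_H] finite_H by (meson card_mono)
lemma deg_eq: "g \<in> vertex h \<Longrightarrow> deg g = deg h" using vertex_eq by simp

lemma colouring_constant_on_vertex:
  assumes "\<forall>h\<in>H. c (\<sigma> h) = c h" "h \<in> H" "g \<in> vertex h"
  shows "c g = c h"
proof -
  have "c ((\<sigma> ^^ k) h) = c h" for k
    using assms(2) by (induction k) (auto simp: assms(1) sigma_funpow_in_H)
  then show ?thesis using assms(3) unfolding vertex_of_def by auto
qed

text \<open>Bipartiteness rules out the degenerate case S = {} of a connecting map: a single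
  vertex carrying both half-edges of an edge cannot be properly 2-coloured.\<close>

lemma S_meets_vertex: "h \<in> H \<Longrightarrow> \<exists>k. (\<sigma> ^^ k) h \<in> S"
proof -
  obtain c :: "'a \<Rightarrow> bool" where c: "\<forall>h\<in>H. c (\<sigma> h) = c h" "\<forall>h\<in>H. c (\<alpha> h) \<noteq> c h"
    using bipartite unfolding bipartite_map_def by blast
  have "\<not> cyclic_on \<sigma> H"
  proof
    assume "cyclic_on \<sigma> H"
    then obtain k where "(\<sigma> ^^ k) r = \<alpha> r" using r_in_H alpha_in_H unfolding cyclic_on_def by blast
    then have "\<alpha> r \<in> vertex r" using sigma_funpow_in_vertex by metis
    then have "c (\<alpha> r) = c r" by (rule colouring_constant_on_vertex[OF c(1) r_in_H])
    then show False using c(2) r_in_H by blast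
  qed
  with S_connecting show "h \<in> H \<Longrightarrow> \<exists>k. (\<sigma> ^^ k) h \<in> S" by blast
qed

abbreviation d where "d h \<equiv> vdist \<sigma> \<alpha> r h"

lemma reach_in_H: "reach \<sigma> \<alpha> r n h \<Longrightarrow> h \<in> H"
proof (induction n arbitrary: h)
  case 0 then show ?case using in_vertex_in_H[OF r_in_H] by simp
next
  case (Suc n) then show ?case using in_vertex_in_H alpha_in_H by (metis reach.simps(2))
qed

lemma reach_vertex: "reach \<sigma> \<alpha> r n h \<Longrightarrow> g \<in> vertex h \<Longrightarrow> reach \<sigma> \<alpha> r n g"
proof (induction n arbitrary: h g)
  case 0 then show ?case using vertex_trans by (metis reach.simps(1))
next
  case (Suc n) then show ?case using vertex_trans by (metis reach.simps(2))
qed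

lemma reach_exists: assumes "h \<in> H" shows "\<exists>n. reach \<sigma> \<alpha> r n h"
proof -
  have "(r, h) \<in> ({(z, \<sigma> z) | z. z \<in> H} \<union> {(z, \<alpha> z) | z. z \<in> H})\<^sup>*"
    using transitive_H r_in_H assms unfolding transitive_on_def by blast
  then show ?thesis
  proof (induction rule: rtrancl_induct)
    case base then show ?case using in_own_vertex by (metis reach.simps(1))
  next
    case (step y z)
    then obtain n where n: "reach \<sigma> \<alpha> r n y" by blast
    from step(2) consider "z = \<sigma> y" | "z = \<alpha> y" by blast
    then show ?case
    proof cases
      case 1 then show ?thesis using n reach_vertex sigma_in_own_vertex by blast
    next
      case 2 then have "reach \<sigma> \<alpha> r (Suc n) z" using n in_own_vertex by auto
      then show ?thesis by blast
    qed
  qed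
qed

lemma reach_d: "h \<in> H \<Longrightarrow> reach \<sigma> \<alpha> r (d h) h"
  unfolding vdist_def using reach_exists by (metis LeastI)

lemma d_le: "reach \<sigma> \<alpha> r n h \<Longrightarrow> d h \<le> n"
  unfolding vdist_def by (rule Least_le)

lemma d_vertex: "h \<in> H \<Longrightarrow> g \<in> vertex h \<Longrightarrow> d g = d h"
  by (meson antisym d_le reach_d reach_vertex vertex_sym in_vertex_in_H)

lemma d_alpha_le: "h \<in> H \<Longrightarrow> d (\<alpha> h) \<le> Suc (d h)"
proof -
  assume "h \<in> H"
  then have "reach \<sigma> \<alpha> r (Suc (d h)) (\<alpha> h)" using reach_d in_own_vertex by auto
  then show ?thesis by (rule d_le)
qed

lemma d_eq_0_iff: "h \<in> H \<Longrightarrow> d h = 0 \<longleftrightarrow> h \<in> vertex r"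
  using reach_d d_le by (metis le_zero_eq reach.simps(1))

lemma d_r: "d r = 0" using d_eq_0_iff r_in_H in_own_vertex by blast

lemma d_SucE:
  assumes "h \<in> H" "d h = Suc n"
  obtains g where "g \<in> H" "d g = n" "\<alpha> g \<in> vertex h"
proof -
  have "reach \<sigma> \<alpha> r (Suc n) h" using assms reach_d by metis
  moreover have "\<not> reach \<sigma> \<alpha> r n h" using assms d_le by fastforce
  ultimately obtain g where g: "reach \<sigma> \<alpha> r n g" "h \<in> vertex (\<alpha> g)" by auto
  have gH: "g \<in> H" using g reach_in_H by blast
  have "d g \<le> n" using g d_le by blast
  moreover have "d h = d (\<alpha> g)" using d_vertex g alpha_in_H gH by (metis vertex_sym)
  then have "Suc n \<le> Suc (d g)" using d_alpha_le gH assms by metis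
  ultimately have "d g = n" by simp
  then show thesis using that gH g vertex_sym by blast
qed

text \<open>In a bipartite map the colour of a vertex is the parity of its distance to the root.\<close>

lemma d_alpha_neq: assumes "h \<in> H" shows "d (\<alpha> h) \<noteq> d h"
proof -
  obtain c :: "'a \<Rightarrow> bool" where c: "\<forall>h\<in>H. c (\<sigma> h) = c h" "\<forall>h\<in>H. c (\<alpha> h) \<noteq> c h"
    using bipartite unfolding bipartite_map_def by blast
  have "\<forall>h\<in>H. d h = n \<longrightarrow> c h = (c r \<longleftrightarrow> even n)" for n
  proof (induction n)
    case 0 then show ?case
      using d_eq_0_iff colouring_constant_on_vertex[OF c(1) r_in_H] by auto
  next
    case (Suc n)
    show ?case
    proof (intro ballI impI)
      fix h assume h: "h \<in> H" "d h = Suc n"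
      then obtain g where g: "g \<in> H" "d g = n" "\<alpha> g \<in> vertex h" by (rule d_SucE)
      have "c h = c (\<alpha> g)"
        using colouring_constant_on_vertex[OF c(1) alpha_in_H[OF g(1)]] g(3) vertex_sym by metis
      then show "c h = (c r \<longleftrightarrow> even (Suc n))" using Suc g c(2) by auto
    qed
  qed
  then show ?thesis using c(2) assms alpha_in_H by metis
qed

lemma d_alpha_cases:
  assumes "h \<in> H" shows "d (\<alpha> h) = Suc (d h) \<or> d h = Suc (d (\<alpha> h))"
proof -
  have "d (\<alpha> h) \<le> Suc (d h)" "d h \<le> Suc (d (\<alpha> h))"
    using d_alpha_le assms alpha_in_H alpha_alpha by metis+
  then show ?thesis using d_alpha_neq[OF assms] by linarith
qed

section \<open>The motion function and the order it induces\<close>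

abbreviation \<theta> where "\<theta> \<equiv> motion \<sigma> \<alpha> S"
abbreviation pos where "pos \<equiv> motion_pos \<sigma> \<alpha> r S"

lemma motion_in_S: "h \<in> S \<Longrightarrow> \<theta> h = \<sigma> (\<alpha> h)" by (simp add: motion_def)
lemma motion_notin_S: "h \<notin> S \<Longrightarrow> \<theta> h = \<sigma> h" by (simp add: motion_def)

lemma motion_in_H: "h \<in> H \<Longrightarrow> \<theta> h \<in> H"
  using S_subset_H by (auto simp: motion_def intro: sigma_in_H alpha_in_H)

lemma motion_funpow_in_H: "h \<in> H \<Longrightarrow> (\<theta> ^^ k) h \<in> H"
  using motion_in_H by (blast intro: funpow_in_closed)

lemma inj_on_motion: "inj_on \<theta> H"
proof (rule inj_onI)
  fix x y assume xy: "x \<in> H" "y \<in> H" "\<theta> x = \<theta> y"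
  have "inj \<sigma>" "inj \<alpha>" using sigma_permutes alpha_permutes permutes_inj by blast+
  then show "x = y"
    using xy alpha_in_S alpha_alpha by (cases "x \<in> S"; cases "y \<in> S") (auto simp: motion_def inj_eq)
qed

lemma motion_funpow_outside_S: "\<forall>j<m. (\<sigma> ^^ j) y \<notin> S \<Longrightarrow> (\<theta> ^^ m) y = (\<sigma> ^^ m) y"
proof (induction m arbitrary: y)
  case (Suc m)
  have "y \<notin> S" using Suc.prems by (metis funpow_0 zero_less_Suc)
  moreover have "\<forall>j<m. (\<sigma> ^^ j) (\<sigma> y) \<notin> S"
    using Suc.prems by (metis Suc_mono funpow_Suc_right comp_apply)
  ultimately show ?case
    using Suc.IH motion_notin_S by (simp add: funpow_Suc_right del: funpow.simps)
qed simp

lemma restr_alpha_S: "s \<in> S \<Longrightarrow> restr \<alpha> S s = \<alpha> s"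
proof -
  assume s: "s \<in> S"
  have "(LEAST k. 0 < k \<and> (\<alpha> ^^ k) s \<in> S) = 1"
    by (rule Least_equality) (use s alpha_in_S in auto)
  then show ?thesis by (simp add: restr_def)
qed

lemma restr_sigma_S:
  assumes x: "x \<in> H"
  obtains m where "0 < m" "restr \<sigma> S x = (\<sigma> ^^ m) x" "(\<sigma> ^^ m) x \<in> S"
    "\<forall>j. 0 < j \<and> j < m \<longrightarrow> (\<sigma> ^^ j) x \<notin> S"
proof -
  let ?m = "LEAST k. 0 < k \<and> (\<sigma> ^^ k) x \<in> S"
  obtain k where k: "(\<sigma> ^^ k) x \<in> S" using S_meets_vertex x by blast
  have "(\<sigma> ^^ (k + deg x)) x = (\<sigma> ^^ k) x" using sigma_funpow_deg by (simp add: funpow_add)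
  moreover have "0 < k + deg x" using deg_pos by simp
  ultimately have "\<exists>k. 0 < k \<and> (\<sigma> ^^ k) x \<in> S" using k by metis
  then have "0 < ?m \<and> (\<sigma> ^^ ?m) x \<in> S" by (rule LeastI_ex)
  moreover have "\<forall>j. 0 < j \<and> j < ?m \<longrightarrow> (\<sigma> ^^ j) x \<notin> S" using not_less_Least by blast
  ultimately show ?thesis by (intro that[of ?m]) (auto simp: restr_def)
qed

text \<open>restr \<sigma> S \<circ> restr \<alpha> S is the face permutation of M|S; since it is cyclic on S,
  the motion function visits all of S.\<close>

lemma motion_reaches_phi:
  assumes s: "s \<in> S"
  shows "\<exists>m. (\<theta> ^^ m) s = (restr \<sigma> S \<circ> restr \<alpha> S) s \<and> (restr \<sigma> S \<circ> restr \<alpha> S) s \<in> S"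
proof -
  have as: "\<alpha> s \<in> H" using s alpha_in_S S_subset_H by blast
  obtain m where m: "0 < m" "restr \<sigma> S (\<alpha> s) = (\<sigma> ^^ m) (\<alpha> s)" "(\<sigma> ^^ m) (\<alpha> s) \<in> S"
    "\<forall>j. 0 < j \<and> j < m \<longrightarrow> (\<sigma> ^^ j) (\<alpha> s) \<notin> S" using restr_sigma_S[OF as] by blast
  have "\<forall>j<m - 1. (\<sigma> ^^ j) (\<sigma> (\<alpha> s)) \<notin> S"
  proof (intro allI impI)
    fix j assume "j < m - 1"
    then have "0 < Suc j \<and> Suc j < m" by simp
    then have "(\<sigma> ^^ (Suc j)) (\<alpha> s) \<notin> S" using m(4) by blast
    then show "(\<sigma> ^^ j) (\<sigma> (\<alpha> s)) \<notin> S" by (simp add: funpow_Suc_right del: funpow.simps)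
  qed
  then have "(\<theta> ^^ (m - 1)) (\<sigma> (\<alpha> s)) = (\<sigma> ^^ (m - 1)) (\<sigma> (\<alpha> s))"
    by (rule motion_funpow_outside_S)
  moreover have "(\<theta> ^^ m) s = (\<theta> ^^ (m - 1)) (\<theta> s)" using m(1) by (rule funpow_eq_funpow_pred)
  moreover have "(\<sigma> ^^ m) (\<alpha> s) = (\<sigma> ^^ (m - 1)) (\<sigma> (\<alpha> s))"
    using m(1) by (rule funpow_eq_funpow_pred)
  ultimately have "(\<theta> ^^ m) s = restr \<sigma> S (\<alpha> s)" using m motion_in_S[OF s] by simp
  then show ?thesis using m restr_alpha_S[OF s] by auto
qed

lemma motion_reaches_S: "s \<in> S \<Longrightarrow> \<exists>k. (\<theta> ^^ k) r = s"
proof -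
  let ?\<phi> = "restr \<sigma> S \<circ> restr \<alpha> S"
  assume s: "s \<in> S"
  let ?k = "LEAST k. (\<sigma> ^^ k) r \<in> S"
  have "(\<sigma> ^^ ?k) r \<in> S" using S_meets_vertex[OF r_in_H] by (rule LeastI_ex)
  moreover have "(\<theta> ^^ ?k) r = (\<sigma> ^^ ?k) r"
    using not_less_Least by (blast intro: motion_funpow_outside_S)
  ultimately obtain s0 k0 where s0: "s0 \<in> S" "(\<theta> ^^ k0) r = s0" by blast
  have "\<exists>k. (\<theta> ^^ k) r = (?\<phi> ^^ n) s0 \<and> (?\<phi> ^^ n) s0 \<in> S" for n
  proof (induction n)
    case 0 then show ?case using s0 by auto
  next
    case (Suc n)
    then obtain k where k: "(\<theta> ^^ k) r = (?\<phi> ^^ n) s0" "(?\<phi> ^^ n) s0 \<in> S" by blast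
    then obtain m where m: "(\<theta> ^^ m) ((?\<phi> ^^ n) s0) = (?\<phi> ^^ Suc n) s0" "(?\<phi> ^^ Suc n) s0 \<in> S"
      using motion_reaches_phi by auto
    have "(\<theta> ^^ (m + k)) r = (?\<phi> ^^ Suc n) s0" using k(1) m(1) by (simp add: funpow_add)
    then show ?case using m(2) by blast
  qed
  moreover obtain n where "(?\<phi> ^^ n) s0 = s" using phi_cyclic_on_S s0 s unfolding cyclic_on_def by blast
  ultimately show ?thesis by blast
qed

lemma motion_reaches_H:
  assumes h: "h \<in> H" shows "\<exists>k. (\<theta> ^^ k) r = h"
proof -
  obtain k where k: "(\<sigma> ^^ k) h \<in> S" using S_meets_vertex h by blast
  have "h \<in> vertex ((\<sigma> ^^ k) h)" by (rule vertex_sym[OF sigma_funpow_in_vertex])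
  then obtain m where m: "h = (\<sigma> ^^ m) ((\<sigma> ^^ k) h)" unfolding vertex_of_def by blast
  have ex: "\<exists>m s. s \<in> S \<and> (\<sigma> ^^ m) s = h" using k m[symmetric] by blast
  let ?m = "LEAST m. \<exists>s. s \<in> S \<and> (\<sigma> ^^ m) s = h"
  obtain s where s: "s \<in> S" "(\<sigma> ^^ ?m) s = h" using LeastI_ex[OF ex] by blast
  show ?thesis
  proof (cases "?m = 0")
    case True then show ?thesis using s motion_reaches_S by auto
  next
    case False
    have "\<forall>j<?m - 1. (\<sigma> ^^ j) (\<sigma> s) \<notin> S"
    proof (intro allI impI notI)
      fix j assume j: "j < ?m - 1" "(\<sigma> ^^ j) (\<sigma> s) \<in> S"
      have e: "Suc ((?m - 1 - j) + j) = ?m" using j False by arith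
      have "(\<sigma> ^^ (Suc ((?m - 1 - j) + j))) s = (\<sigma> ^^ (?m - 1 - j)) ((\<sigma> ^^ j) (\<sigma> s))"
        by (simp add: funpow_Suc_right funpow_add del: funpow.simps)
      then have "(\<sigma> ^^ (?m - 1 - j)) ((\<sigma> ^^ j) (\<sigma> s)) = h" using s e by simp
      then have "?m \<le> ?m - 1 - j" using j(2) by (metis (mono_tags, lifting) Least_le)
      then show False using False by linarith
    qed
    then have "(\<theta> ^^ (?m - 1)) (\<sigma> s) = (\<sigma> ^^ (?m - 1)) (\<sigma> s)" by (rule motion_funpow_outside_S)
    moreover have "\<theta> (\<alpha> s) = \<sigma> s" using motion_in_S alpha_in_S alpha_alpha s S_subset_H by auto
    moreover have "(\<theta> ^^ ?m) (\<alpha> s) = (\<theta> ^^ (?m - 1)) (\<theta> (\<alpha> s))"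
      using False by (intro funpow_eq_funpow_pred) simp
    moreover have "(\<sigma> ^^ (?m - 1)) (\<sigma> s) = h" using s False funpow_eq_funpow_pred[of ?m \<sigma> s] by simp
    ultimately have "(\<theta> ^^ ?m) (\<alpha> s) = h" by simp
    moreover obtain k where "(\<theta> ^^ k) r = \<alpha> s" using motion_reaches_S alpha_in_S s by blast
    ultimately have "(\<theta> ^^ (?m + k)) r = h" by (simp add: funpow_add)
    then show ?thesis by blast
  qed
qed

lemma motion_funpow_distinct: assumes "i < j" "j < card H" shows "(\<theta> ^^ i) r \<noteq> (\<theta> ^^ j) r"
proof
  assume eq: "(\<theta> ^^ i) r = (\<theta> ^^ j) r"
  have "(\<theta> ^^ i) ((\<theta> ^^ (j - i)) r) = (\<theta> ^^ i) r"
    using eq assms by (metis funpow_add comp_apply le_add_diff_inverse less_imp_le)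
  then have period: "(\<theta> ^^ (j - i)) r = r"
    using funpow_inj_on[OF inj_on_motion] motion_in_H motion_funpow_in_H r_in_H by blast
  have "H \<subseteq> (\<lambda>k. (\<theta> ^^ k) r) ` {..<j - i}"
  proof
    fix h assume "h \<in> H"
    then obtain k where "(\<theta> ^^ k) r = h" using motion_reaches_H by blast
    then have "h = (\<theta> ^^ (k mod (j - i))) r" using funpow_mod_eq[OF period] by metis
    moreover have "k mod (j - i) < j - i" using assms by simp
    ultimately show "h \<in> (\<lambda>k. (\<theta> ^^ k) r) ` {..<j - i}" by blast
  qed
  then have "card H \<le> j - i" by (metis card_image_le card_lessThan finite_lessThan le_trans card_mono finite_imageI)
  then show False using assms by linarith
qed

lemma motion_orbit_eq_H: "(\<lambda>k. (\<theta> ^^ k) r) ` {..<card H} = H"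
proof (rule card_subset_eq[OF finite_H])
  show "(\<lambda>k. (\<theta> ^^ k) r) ` {..<card H} \<subseteq> H" using motion_funpow_in_H r_in_H by blast
  have "inj_on (\<lambda>k. (\<theta> ^^ k) r) {..<card H}"
    by (rule inj_onI) (metis lessThan_iff linorder_neqE_nat motion_funpow_distinct)
  then show "card ((\<lambda>k. (\<theta> ^^ k) r) ` {..<card H}) = card H" by (simp add: card_image)
qed

lemma pos_less_card_H: "h \<in> H \<Longrightarrow> pos h < card H"
  and motion_funpow_pos: "h \<in> H \<Longrightarrow> (\<theta> ^^ pos h) r = h"
proof -
  assume "h \<in> H"
  then obtain k where k: "k < card H" "(\<theta> ^^ k) r = h" using motion_orbit_eq_H by force
  show "(\<theta> ^^ pos h) r = h" unfolding motion_pos_def using k by (metis (mono_tags, lifting) LeastI)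
  show "pos h < card H"
    unfolding motion_pos_def using k by (metis (mono_tags, lifting) Least_le le_less_trans)
qed

lemma pos_motion_funpow: assumes "k < card H" shows "pos ((\<theta> ^^ k) r) = k"
proof -
  have "(\<theta> ^^ k) r \<in> H" using motion_funpow_in_H r_in_H by blast
  then have "(\<theta> ^^ pos ((\<theta> ^^ k) r)) r = (\<theta> ^^ k) r" by (rule motion_funpow_pos)
  moreover have "pos ((\<theta> ^^ k) r) \<le> k" unfolding motion_pos_def by (rule Least_le) simp
  ultimately show ?thesis using motion_funpow_distinct assms by (metis le_neq_implies_less)
qed

lemma pos_inj: "g \<in> H \<Longrightarrow> h \<in> H \<Longrightarrow> pos g = pos h \<Longrightarrow> g = h"
  using motion_funpow_pos by metis

lemma motion_funpow_card_H: "(\<theta> ^^ card H) r = r"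
proof -
  have "(\<theta> ^^ card H) r \<in> H" using motion_funpow_in_H r_in_H by blast
  then obtain k where k: "k < card H" "(\<theta> ^^ k) r = (\<theta> ^^ card H) r" using motion_orbit_eq_H by force
  show ?thesis
  proof (cases k)
    case 0 then show ?thesis using k by simp
  next
    case (Suc k')
    have "card H > 0" using k by simp
    have "(\<theta> ^^ card H) r = \<theta> ((\<theta> ^^ (card H - 1)) r)" using \<open>card H > 0\<close>
      by (metis Suc_diff_1 funpow.simps(2) comp_apply)
    then have "\<theta> ((\<theta> ^^ k') r) = \<theta> ((\<theta> ^^ (card H - 1)) r)" using k Suc by simp
    then have "(\<theta> ^^ k') r = (\<theta> ^^ (card H - 1)) r"
      using inj_on_motion motion_funpow_in_H r_in_H by (meson inj_onD)
    moreover have "k' < card H" "card H - 1 < card H" using k Suc by auto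
    ultimately have "k' = card H - 1" using motion_funpow_distinct by (metis linorder_neqE_nat)
    then show ?thesis using k Suc by simp
  qed
qed

lemma pos_motion: assumes "h \<in> H" "\<theta> h \<noteq> r" shows "pos (\<theta> h) = Suc (pos h)"
proof -
  have e: "(\<theta> ^^ Suc (pos h)) r = \<theta> h" using motion_funpow_pos[OF assms(1)] by simp
  then have "Suc (pos h) \<noteq> card H" using motion_funpow_card_H assms(2) by metis
  then have "Suc (pos h) < card H" using pos_less_card_H[OF assms(1)] by linarith
  then show ?thesis using pos_motion_funpow e by metis
qed

lemma pos_predecessor:
  assumes "h \<in> H" "h \<noteq> r" obtains z where "z \<in> H" "\<theta> z = h" "Suc (pos z) = pos h"
proof -
  have "pos h \<noteq> 0" using motion_funpow_pos[OF assms(1)] assms(2) by (metis funpow_0)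
  then obtain k where k: "pos h = Suc k" using not0_implies_Suc by blast
  have "\<theta> ((\<theta> ^^ k) r) = h" using motion_funpow_pos[OF assms(1)] k by simp
  moreover have "pos ((\<theta> ^^ k) r) = k" using pos_motion_funpow pos_less_card_H[OF assms(1)] k by simp
  ultimately show thesis using that[of "(\<theta> ^^ k) r"] k motion_funpow_in_H[OF r_in_H] by simp
qed

lemma pos_sigma_notin_S: "y \<in> H \<Longrightarrow> y \<notin> S \<Longrightarrow> \<sigma> y \<noteq> r \<Longrightarrow> pos (\<sigma> y) = Suc (pos y)"
  using pos_motion motion_notin_S by metis

lemma pos_sigma_in_S: "y \<in> S \<Longrightarrow> \<sigma> y \<noteq> r \<Longrightarrow> pos (\<sigma> y) = Suc (pos (\<alpha> y))"
proof -
  assume y: "y \<in> S" "\<sigma> y \<noteq> r"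
  have "\<theta> (\<alpha> y) = \<sigma> y" using motion_in_S[OF alpha_in_S[OF y(1)]] alpha_alpha y S_subset_H by auto
  then show ?thesis using pos_motion y alpha_in_H S_subset_H by (metis subsetD)
qed

definition tree_out :: "'a \<Rightarrow> bool" where "tree_out x \<longleftrightarrow> x \<in> S \<and> pos x < pos (\<alpha> x)"
definition tree_in :: "'a \<Rightarrow> bool" where "tree_in x \<longleftrightarrow> x \<in> S \<and> pos (\<alpha> x) < pos x"

lemma tree_out_S: "tree_out x \<Longrightarrow> x \<in> S" by (simp add: tree_out_def)
lemma tree_in_S: "tree_in x \<Longrightarrow> x \<in> S" by (simp add: tree_in_def)
lemma tree_in_H: "tree_in x \<Longrightarrow> x \<in> H" using S_subset_H tree_in_S by blast

lemma tree_out_or_in: "x \<in> S \<Longrightarrow> tree_out x \<or> tree_in x"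
proof -
  assume x: "x \<in> S"
  have "pos x \<noteq> pos (\<alpha> x)" using pos_inj alpha_neq x S_subset_H alpha_in_H by (metis subsetD)
  then show ?thesis using x unfolding tree_out_def tree_in_def by linarith
qed

lemma tree_out_alpha_iff: "x \<in> S \<Longrightarrow> tree_out (\<alpha> x) \<longleftrightarrow> tree_in x"
  and tree_in_alpha_iff: "x \<in> S \<Longrightarrow> tree_in (\<alpha> x) \<longleftrightarrow> tree_out x"
  unfolding tree_out_def tree_in_def using alpha_in_S alpha_alpha S_subset_H by auto

lemma vertex_entry:
  assumes h: "h \<in> H" "0 < d h"
  obtains e q where "e \<in> vertex h" "\<forall>y\<in>vertex h. pos e \<le> pos y" "q \<in> S" "q \<in> vertex h"
    "\<sigma> q = e" "Suc (pos (\<alpha> q)) = pos e"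
proof -
  obtain e where e: "e \<in> vertex h" "\<forall>y\<in>vertex h. pos e \<le> pos y"
    using ex_has_least_nat[of "\<lambda>y. y \<in> vertex h" h pos] in_own_vertex by blast
  have eH: "e \<in> H" using e in_vertex_in_H h by blast
  have "e \<noteq> r" using d_vertex[OF h(1) e(1)] h d_r by auto
  then obtain z where z: "z \<in> H" "\<theta> z = e" "Suc (pos z) = pos e" using pos_predecessor eH by blast
  have z_notin: "z \<notin> vertex h" using z e by fastforce
  have zS: "z \<in> S"
  proof (rule ccontr)
    assume "z \<notin> S"
    then have "\<sigma> z = e" using z motion_notin_S by simp
    then show False using z_notin e sigma_in_vertex_iff by metis
  qed
  have "\<sigma> (\<alpha> z) = e" using z motion_in_S[OF zS] by simp
  moreover have "\<alpha> (\<alpha> z) = z" using alpha_alpha z by simp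
  ultimately show thesis
    using that[of e "\<alpha> z"] e z z_notin alpha_in_S[OF zS] sigma_in_vertex_iff by metis
qed

lemma d_le_Max: "h \<in> H \<Longrightarrow> d h \<le> Max (d ` H)" using finite_H by simp

end

section \<open>Maps whose tree edges are first visited at their end closer to the root\<close>

locale ascending_tree = bipartite_covered_map +
  assumes tree_out_ascends: "tree_out x \<Longrightarrow> d (\<alpha> x) = Suc (d x)"
begin

lemma tree_in_descends: "tree_in y \<Longrightarrow> d y = Suc (d (\<alpha> y))"
  using tree_out_ascends tree_out_alpha_iff tree_in_S alpha_alpha tree_in_H by metis

text \<open>Around a vertex, the motion function only leaves through tree edges going away from
  the root and, by hypothesis, comes back after visiting farther half-edges only.\<close>

lemma sigma_step_around_vertex:
  assumes h: "h \<in> H" "0 < d h" and y: "y \<in> vertex h" "\<not> tree_in y"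
    and returns: "\<forall>y\<in>vertex h. tree_out y \<longrightarrow> (\<forall>x\<in>H. pos y < pos x \<and> pos x \<le> pos (\<alpha> y) \<longrightarrow> d h < d x)"
  shows "pos y < pos (\<sigma> y)" "\<forall>x\<in>H. pos y < pos x \<and> pos x \<le> pos (\<sigma> y) \<longrightarrow> x \<in> vertex h \<or> d h < d x"
proof -
  have yH: "y \<in> H" using in_vertex_in_H[OF h(1) y(1)] .
  have sy: "\<sigma> y \<in> vertex h" "\<sigma> y \<in> H" using sigma_in_vertex_iff y(1) sigma_in_H yH by auto
  then have "\<sigma> y \<noteq> r" using d_vertex[OF h(1)] h(2) d_r by fastforce
  have "pos y < pos (\<sigma> y) \<and> (\<forall>x\<in>H. pos y < pos x \<and> pos x \<le> pos (\<sigma> y) \<longrightarrow> x \<in> vertex h \<or> d h < d x)"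
  proof (cases "y \<in> S")
    case False
    then have ps: "pos (\<sigma> y) = Suc (pos y)" using pos_sigma_notin_S yH \<open>\<sigma> y \<noteq> r\<close> by blast
    have "x = \<sigma> y" if "x \<in> H" "pos y < pos x" "pos x \<le> pos (\<sigma> y)" for x
      using that ps pos_inj sy(2) by (metis le_antisym Suc_leI)
    then show ?thesis using ps sy(1) by auto
  next
    case True
    then have out: "tree_out y" using y(2) tree_out_or_in by blast
    have ps: "pos (\<sigma> y) = Suc (pos (\<alpha> y))" using pos_sigma_in_S True \<open>\<sigma> y \<noteq> r\<close> by blast
    have "x \<in> vertex h \<or> d h < d x" if "x \<in> H" "pos y < pos x" "pos x \<le> pos (\<sigma> y)" for x
    proof (cases "pos x \<le> pos (\<alpha> y)")
      case True then show ?thesis using returns y(1) out that by blast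
    next
      case False
      then have "x = \<sigma> y" using that ps pos_inj sy(2) by (metis le_antisym not_less_eq_eq)
      then show ?thesis using sy(1) by blast
    qed
    then show ?thesis using ps out tree_out_def by auto
  qed
  then show "pos y < pos (\<sigma> y)" "\<forall>x\<in>H. pos y < pos x \<and> pos x \<le> pos (\<sigma> y) \<longrightarrow> x \<in> vertex h \<or> d h < d x"
    by blast+
qed

lemma turn_around_vertex:
  assumes h: "h \<in> H" "0 < d h" and e: "e \<in> vertex h"
    and returns: "\<forall>y\<in>vertex h. tree_out y \<longrightarrow> (\<forall>x\<in>H. pos y < pos x \<and> pos x \<le> pos (\<alpha> y) \<longrightarrow> d h < d x)"
  shows "\<forall>j<i. \<not> tree_in ((\<sigma> ^^ j) e) \<Longrightarrow> pos e \<le> pos ((\<sigma> ^^ i) e) \<and>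
    (\<forall>x\<in>H. pos e \<le> pos x \<and> pos x \<le> pos ((\<sigma> ^^ i) e) \<longrightarrow> x \<in> vertex h \<or> d h < d x) \<and>
    (\<forall>j<i. pos ((\<sigma> ^^ j) e) < pos ((\<sigma> ^^ i) e))"
proof (induction i)
  case 0
  have "x = e" if "x \<in> H" "pos e \<le> pos x" "pos x \<le> pos e" for x
    using pos_inj that in_vertex_in_H[OF h(1) e] by (metis le_antisym)
  then show ?case using e by auto
next
  case (Suc i)
  let ?c = "(\<sigma> ^^ i) e"
  have IH: "pos e \<le> pos ?c" "\<forall>x\<in>H. pos e \<le> pos x \<and> pos x \<le> pos ?c \<longrightarrow> x \<in> vertex h \<or> d h < d x"
    "\<forall>j<i. pos ((\<sigma> ^^ j) e) < pos ?c" using Suc by auto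
  have "?c \<in> vertex h" by (rule vertex_trans[OF e sigma_funpow_in_vertex])
  moreover have "\<not> tree_in ?c" using Suc.prems by simp
  ultimately have step: "pos ?c < pos (\<sigma> ?c)"
    "\<forall>x\<in>H. pos ?c < pos x \<and> pos x \<le> pos (\<sigma> ?c) \<longrightarrow> x \<in> vertex h \<or> d h < d x"
    using sigma_step_around_vertex[OF h _ _ returns] by blast+
  have "\<forall>x\<in>H. pos e \<le> pos x \<and> pos x \<le> pos (\<sigma> ?c) \<longrightarrow> x \<in> vertex h \<or> d h < d x"
  proof (intro ballI impI)
    fix x assume x: "x \<in> H" "pos e \<le> pos x \<and> pos x \<le> pos (\<sigma> ?c)"
    show "x \<in> vertex h \<or> d h < d x"
    proof (cases "pos x \<le> pos ?c")
      case True then show ?thesis using IH(2) x by blast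
    next
      case False then show ?thesis using step(2) x by auto
    qed
  qed
  moreover have "pos e \<le> pos (\<sigma> ?c)" using IH(1) step(1) by linarith
  moreover have "\<forall>j<Suc i. pos ((\<sigma> ^^ j) e) < pos (\<sigma> ?c)"
  proof (intro allI impI)
    fix j assume "j < Suc i"
    then consider "j < i" | "j = i" by linarith
    then show "pos ((\<sigma> ^^ j) e) < pos (\<sigma> ?c)" using IH(3) step(1) by cases auto
  qed
  ultimately show ?case by simp
qed

text \<open>The motion function enters the vertex of h through the tree edge {\<alpha> q, q}, turns once
  around it in the order of \<sigma> starting at \<sigma> q, and leaves it at q; between \<alpha> q and q it
  only visits half-edges of this vertex or farther from the root.\<close>

definition vertex_visit :: "'a \<Rightarrow> 'a \<Rightarrow> bool" where
  "vertex_visit h q \<longleftrightarrow> q \<in> vertex h \<and> tree_in q \<and> (\<forall>y\<in>vertex h. tree_in y \<longrightarrow> y = q) \<and>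
    (\<forall>i j. i < j \<longrightarrow> j < deg h \<longrightarrow> pos ((\<sigma> ^^ i) (\<sigma> q)) < pos ((\<sigma> ^^ j) (\<sigma> q))) \<and>
    (\<forall>x\<in>H. pos (\<alpha> q) < pos x \<and> pos x \<le> pos q \<longrightarrow> x \<in> vertex h \<or> d h < d x) \<and>
    pos (\<sigma> q) = Suc (pos (\<alpha> q))"

lemma vertex_visit_returns:
  assumes visit: "vertex_visit (\<alpha> y) q" and y: "y \<in> H" "tree_out y"
    and x: "x \<in> H" "pos y < pos x" "pos x \<le> pos (\<alpha> y)"
  shows "d y < d x"
proof -
  have "\<alpha> y = q"
    using visit tree_in_alpha_iff[OF tree_out_S[OF y(2)]] y(2) in_own_vertex
    unfolding vertex_visit_def by blast
  then have "x \<in> vertex (\<alpha> y) \<or> d (\<alpha> y) < d x"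
    using visit x alpha_alpha[OF y(1)] unfolding vertex_visit_def by auto
  moreover have "d (\<alpha> y) = Suc (d y)" using tree_out_ascends[OF y(2)] .
  ultimately show ?thesis using d_vertex[OF alpha_in_H[OF y(1)]] by fastforce
qed

lemma first_tree_in_is_entry:
  assumes h: "h \<in> H" and e: "\<forall>y\<in>vertex h. pos e \<le> pos y"
    and q: "q \<in> vertex h" "Suc (pos (\<alpha> q)) = pos e"
    and y: "y \<in> vertex h" "tree_in y" "pos y \<le> pos w"
    and walk: "\<forall>x\<in>H. pos e \<le> pos x \<and> pos x \<le> pos w \<longrightarrow> x \<in> vertex h \<or> d h < d x"
  shows "y = q"
proof (rule ccontr)
  assume ne: "y \<noteq> q"
  have yH: "y \<in> H" and ayH: "\<alpha> y \<in> H" using in_vertex_in_H[OF h y(1)] alpha_in_H by auto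
  have "d (\<alpha> y) < d h" using tree_in_descends[OF y(2)] d_vertex[OF h y(1)] by simp
  moreover have "pos e \<le> pos (\<alpha> y)"
  proof -
    have "\<sigma> y \<noteq> r"
      using d_vertex h y(1) sigma_in_vertex_iff tree_in_descends[OF y(2)] d_r by (metis Zero_not_Suc)
    then have "pos (\<sigma> y) = Suc (pos (\<alpha> y))" using pos_sigma_in_S tree_in_S[OF y(2)] by blast
    moreover have "pos e \<le> pos (\<sigma> y)" using e sigma_in_vertex_iff y(1) by blast
    moreover have "\<alpha> y \<noteq> \<alpha> q" using ne alpha_alpha yH in_vertex_in_H[OF h q(1)] by metis
    then have "pos (\<alpha> y) \<noteq> pos (\<alpha> q)" using pos_inj ayH alpha_in_H in_vertex_in_H[OF h q(1)] by blast
    ultimately show ?thesis using q(2) by linarith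
  qed
  moreover have "pos (\<alpha> y) \<le> pos w" using y tree_in_def by simp
  ultimately show False using walk ayH d_vertex[OF h] by fastforce
qed

lemma vertex_visit_if_returns:
  assumes h: "h \<in> H" "0 < d h"
    and returns: "\<forall>y\<in>vertex h. tree_out y \<longrightarrow> (\<forall>x\<in>H. pos y < pos x \<and> pos x \<le> pos (\<alpha> y) \<longrightarrow> d h < d x)"
  shows "\<exists>q. vertex_visit h q"
proof -
  obtain e q where e: "e \<in> vertex h" "\<forall>y\<in>vertex h. pos e \<le> pos y"
    and q: "q \<in> S" "q \<in> vertex h" "\<sigma> q = e" "Suc (pos (\<alpha> q)) = pos e"
    using vertex_entry[OF h] by blast
  have deg_e: "deg e = deg h" using deg_eq[OF e(1)] .
  have "(\<sigma> ^^ (deg h - 1)) e = (\<sigma> ^^ deg h) q"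
    using funpow_eq_funpow_pred[of "deg h" \<sigma> q] deg_pos q(3) by simp
  also have "\<dots> = q" using sigma_funpow_deg[of q] deg_eq[OF q(2)] by simp
  finally have q_last: "(\<sigma> ^^ (deg h - 1)) e = q" .
  have "pos e \<le> pos q" using e(2) q(2) by blast
  then have q_in: "tree_in q" using q(1,4) unfolding tree_in_def by linarith
  have "deg h - 1 < deg h \<and> tree_in ((\<sigma> ^^ (deg h - 1)) e)" using q_last q_in deg_pos by simp
  then obtain m where m: "m < deg h" "tree_in ((\<sigma> ^^ m) e)" "\<forall>j<m. \<not> tree_in ((\<sigma> ^^ j) e)"
    using exists_least_iff[of "\<lambda>m. m < deg h \<and> tree_in ((\<sigma> ^^ m) e)"] by (meson less_trans)
  have walk: "pos e \<le> pos ((\<sigma> ^^ m) e)"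
    "\<forall>x\<in>H. pos e \<le> pos x \<and> pos x \<le> pos ((\<sigma> ^^ m) e) \<longrightarrow> x \<in> vertex h \<or> d h < d x"
    "\<forall>j<m. pos ((\<sigma> ^^ j) e) < pos ((\<sigma> ^^ m) e)"
    using turn_around_vertex[OF h e(1) returns m(3)] by blast+
  have "(\<sigma> ^^ m) e = q"
    using first_tree_in_is_entry[OF h(1) e(2) q(2,4) vertex_trans[OF e(1) sigma_funpow_in_vertex] m(2)]
      walk(2) by blast
  then have m_last: "m = deg h - 1"
    using q_last m(1) sigma_funpow_inj_below_deg[of m e "deg h - 1"] deg_e deg_pos by simp
  have "vertex_visit h q" unfolding vertex_visit_def
  proof (intro conjI)
    show "\<forall>y\<in>vertex h. tree_in y \<longrightarrow> y = q"
    proof (intro ballI impI)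
      fix y assume y: "y \<in> vertex h" "tree_in y"
      obtain i where i: "i < deg h" "y = (\<sigma> ^^ i) e" using vertex_index vertex_eq[OF e(1)] deg_e y(1) by metis
      then have "i \<le> m" using m_last by simp
      then have "pos y \<le> pos ((\<sigma> ^^ m) e)" using walk(3) i(2) by (cases "i = m") (auto intro: less_imp_le)
      then show "y = q" using first_tree_in_is_entry[OF h(1) e(2) q(2,4) y] walk(2) by blast
    qed
    show "\<forall>i j. i < j \<longrightarrow> j < deg h \<longrightarrow> pos ((\<sigma> ^^ i) (\<sigma> q)) < pos ((\<sigma> ^^ j) (\<sigma> q))"
    proof (intro allI impI)
      fix i j assume ij: "i < j" "j < deg h"
      then have "\<forall>j'<j. \<not> tree_in ((\<sigma> ^^ j') e)" using m(3) m_last by auto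
      then show "pos ((\<sigma> ^^ i) (\<sigma> q)) < pos ((\<sigma> ^^ j) (\<sigma> q))"
        using turn_around_vertex[OF h e(1) returns] ij q(3) by blast
    qed
    show "\<forall>x\<in>H. pos (\<alpha> q) < pos x \<and> pos x \<le> pos q \<longrightarrow> x \<in> vertex h \<or> d h < d x"
      using walk(2) \<open>(\<sigma> ^^ m) e = q\<close> q(4) by auto
  qed (use q q_in in simp_all)
  then show ?thesis by blast
qed

lemma vertex_visit_exists: "h \<in> H \<Longrightarrow> 0 < d h \<Longrightarrow> \<exists>q. vertex_visit h q"
proof (induction "Max (d ` H) - d h" arbitrary: h rule: less_induct)
  case less
  note h = less.prems
  have returns: "\<forall>y\<in>vertex h. tree_out y \<longrightarrow> (\<forall>x\<in>H. pos y < pos x \<and> pos x \<le> pos (\<alpha> y) \<longrightarrow> d h < d x)"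
  proof (intro ballI impI, elim conjE)
    fix y x assume y: "y \<in> vertex h" "tree_out y" and x: "x \<in> H" "pos y < pos x" "pos x \<le> pos (\<alpha> y)"
    have yH: "y \<in> H" using in_vertex_in_H[OF h(1) y(1)] .
    have "d (\<alpha> y) = Suc (d h)" using tree_out_ascends[OF y(2)] d_vertex[OF h(1) y(1)] by simp
    then obtain q where "vertex_visit (\<alpha> y) q"
      using less.hyps[of "\<alpha> y"] d_le_Max[OF alpha_in_H[OF yH]] alpha_in_H[OF yH] by force
    then show "d h < d x" using vertex_visit_returns yH y(2) x d_vertex[OF h(1) y(1)] by metis
  qed
  then show ?case using vertex_visit_if_returns[OF h] by blast
qed

definition entry :: "'a \<Rightarrow> 'a" where "entry h = (SOME q. vertex_visit h q)"

lemma vertex_visit_entry: "h \<in> H \<Longrightarrow> 0 < d h \<Longrightarrow> vertex_visit h (entry h)"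
  unfolding entry_def using vertex_visit_exists someI_ex by metis

lemma entry_vertex: assumes "h \<in> H" "g \<in> vertex h" shows "entry g = entry h"
proof -
  have "vertex g = vertex h" "deg g = deg h" "d g = d h" using vertex_eq deg_eq d_vertex assms by auto
  then show ?thesis unfolding entry_def vertex_visit_def by simp
qed

lemma entry_in_vertex: "h \<in> H \<Longrightarrow> 0 < d h \<Longrightarrow> entry h \<in> vertex h"
  and tree_in_entry: "h \<in> H \<Longrightarrow> 0 < d h \<Longrightarrow> tree_in (entry h)"
  and tree_in_eq_entry: "h \<in> H \<Longrightarrow> 0 < d h \<Longrightarrow> y \<in> vertex h \<Longrightarrow> tree_in y \<Longrightarrow> y = entry h"
  and pos_turn_mono: "h \<in> H \<Longrightarrow> 0 < d h \<Longrightarrow> i < j \<Longrightarrow> j < deg h \<Longrightarrow>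
    pos ((\<sigma> ^^ i) (\<sigma> (entry h))) < pos ((\<sigma> ^^ j) (\<sigma> (entry h)))"
  and entry_block: "h \<in> H \<Longrightarrow> 0 < d h \<Longrightarrow> x \<in> H \<Longrightarrow> pos (\<alpha> (entry h)) < pos x \<Longrightarrow>
    pos x \<le> pos (entry h) \<Longrightarrow> x \<in> vertex h \<or> d h < d x"
  and pos_sigma_entry: "h \<in> H \<Longrightarrow> 0 < d h \<Longrightarrow> pos (\<sigma> (entry h)) = Suc (pos (\<alpha> (entry h)))"
  using vertex_visit_entry unfolding vertex_visit_def by blast+

lemma entry_in_H: "h \<in> H \<Longrightarrow> 0 < d h \<Longrightarrow> entry h \<in> H"
  using entry_in_vertex in_vertex_in_H by blast

lemma pos_in_entry_block:
  assumes h: "h \<in> H" "0 < d h" and y: "y \<in> vertex h"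
  shows "pos (\<alpha> (entry h)) < pos y \<and> pos y \<le> pos (entry h)"
proof -
  let ?q = "entry h"
  have q: "?q \<in> vertex h" using entry_in_vertex[OF h] .
  have deg_sq: "deg (\<sigma> ?q) = deg h" using deg_eq q sigma_in_vertex_iff by metis
  have "y \<in> vertex (\<sigma> ?q)" using y q sigma_in_vertex_iff vertex_eq by metis
  then obtain i where i: "i < deg h" "y = (\<sigma> ^^ i) (\<sigma> ?q)" using vertex_index deg_sq by metis
  have last: "(\<sigma> ^^ (deg h - 1)) (\<sigma> ?q) = ?q"
    using funpow_eq_funpow_pred[of "deg h" \<sigma> ?q] deg_pos sigma_funpow_deg[of ?q] deg_eq[OF q] by simp
  have mono: "pos ((\<sigma> ^^ i) (\<sigma> ?q)) \<le> pos ((\<sigma> ^^ j) (\<sigma> ?q))" if "i \<le> j" "j < deg h" for i j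
    using pos_turn_mono[OF h, of i j] that by (cases "i = j") auto
  have "pos (\<sigma> ?q) \<le> pos y" using mono[of 0 i] i by simp
  moreover have "pos y \<le> pos ?q" using mono[of i "deg h - 1"] i last by simp
  ultimately show ?thesis using pos_sigma_entry[OF h] by simp
qed

lemma pos_root_vertex_mono:
  assumes "i < j" "j < deg r" shows "pos ((\<sigma> ^^ i) r) < pos ((\<sigma> ^^ j) r)"
proof -
  have step: "pos y < pos (\<sigma> y)" if y: "y \<in> vertex r" "\<sigma> y \<noteq> r" for y
  proof -
    have yH: "y \<in> H" using y in_vertex_in_H r_in_H by blast
    show ?thesis
    proof (cases "y \<in> S")
      case False then show ?thesis using pos_sigma_notin_S yH y by simp
    next
      case True
      have "\<not> tree_in y" using tree_in_descends[of y] d_vertex[OF r_in_H y(1)] d_r by auto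
      then have "tree_out y" using tree_out_or_in True by blast
      then show ?thesis using pos_sigma_in_S True y tree_out_def by simp
    qed
  qed
  have "\<forall>i<j. pos ((\<sigma> ^^ i) r) < pos ((\<sigma> ^^ j) r)" if "j < deg r" for j
    using that
  proof (induction j)
    case (Suc j)
    have "\<sigma> ((\<sigma> ^^ j) r) \<noteq> r"
    proof
      assume "\<sigma> ((\<sigma> ^^ j) r) = r"
      then have "(\<sigma> ^^ Suc j) r = (\<sigma> ^^ 0) r" by simp
      then show False using sigma_funpow_inj_below_deg Suc.prems by (metis Zero_not_Suc deg_pos)
    qed
    then have "pos ((\<sigma> ^^ j) r) < pos ((\<sigma> ^^ Suc j) r)" using step[OF sigma_funpow_in_vertex] by simp
    then show ?case using Suc by (metis less_Suc_eq order.strict_trans Suc_lessD)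
  qed simp
  then show ?thesis using assms by blast
qed

lemma vertex_blocks_separated:
  assumes h: "h \<in> H" "0 < d h" and h': "h' \<in> H" "d h' = d h" and ne: "h' \<notin> vertex h"
    and lt: "pos (\<sigma> (entry h)) < pos (\<sigma> (entry h'))"
    and y: "y \<in> vertex h" and y': "y' \<in> vertex h'"
  shows "pos y < pos y'"
proof -
  have h'_pos: "0 < d h'" using h h' by simp
  let ?q = "entry h" and ?q' = "entry h'"
  have sq': "\<sigma> ?q' \<in> vertex h'" using entry_in_vertex[OF h'(1) h'_pos] sigma_in_vertex_iff by blast
  have sqH: "\<sigma> ?q' \<in> H" using sq' in_vertex_in_H h' by blast
  have "\<not> pos (\<sigma> ?q') \<le> pos ?q"
  proof
    assume le: "pos (\<sigma> ?q') \<le> pos ?q"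
    have "pos (\<alpha> ?q) < pos (\<sigma> ?q')" using lt pos_sigma_entry[OF h] by simp
    then have "\<sigma> ?q' \<in> vertex h \<or> d h < d (\<sigma> ?q')" using entry_block[OF h sqH] le by blast
    moreover have "\<sigma> ?q' \<notin> vertex h" using sq' ne vertex_eq in_own_vertex by metis
    moreover have "d (\<sigma> ?q') = d h" using d_vertex h' sq' by simp
    ultimately show False by simp
  qed
  moreover have "pos y \<le> pos ?q" using pos_in_entry_block[OF h y] by simp
  moreover have "pos (\<sigma> ?q') \<le> pos y'"
    using pos_in_entry_block[OF h'(1) h'_pos y'] pos_sigma_entry[OF h'(1) h'_pos] by simp
  ultimately show ?thesis by linarith
qed

end

section \<open>Parent choices and breadth-first keys\<close>

context bipartite_covered_map
begin

definition parent_choice :: "('a \<Rightarrow> 'a) \<Rightarrow> bool" where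
  "parent_choice P \<longleftrightarrow>
     (\<forall>h\<in>H. 0 < d h \<longrightarrow> P h \<in> H \<and> \<alpha> (P h) \<in> vertex h \<and> Suc (d (P h)) = d h) \<and>
     (\<forall>h\<in>H. \<forall>g\<in>vertex h. P g = P h)"

definition tree_edges :: "('a \<Rightarrow> 'a) \<Rightarrow> 'a set" where
  "tree_edges P = {x. \<exists>c\<in>H. 0 < d c \<and> (x = P c \<or> x = \<alpha> (P c))}"

definition parent_candidates :: "'a \<Rightarrow> 'a set" where
  "parent_candidates h = {g \<in> H. \<alpha> g \<in> vertex h \<and> Suc (d g) = d h}"

text \<open>As in rightmost_bfs_tree: the half-edge at which the inspection of a vertex starts,
  and the index of a half-edge in that inspection.\<close>

definition inspection_start :: "('a \<Rightarrow> 'a) \<Rightarrow> 'a \<Rightarrow> 'a" where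
  "inspection_start P h = (if d h = 0 then r else \<sigma> (\<alpha> (P h)))"

definition inspection_index :: "('a \<Rightarrow> 'a) \<Rightarrow> 'a \<Rightarrow> nat" where
  "inspection_index P h = (LEAST i. (\<sigma> ^^ i) (inspection_start P h) = h)"

text \<open>The key of a vertex lists, in base radix, the inspection indices of the parent
  half-edges on its path to the root; keys of vertices at equal distance therefore compare
  like the times at which the rightmost BFS discovers them.\<close>

definition radix :: nat where "radix = Suc (card H)"

fun key_at :: "('a \<Rightarrow> 'a) \<Rightarrow> nat \<Rightarrow> 'a \<Rightarrow> nat" where
  "key_at P 0 h = 0"
| "key_at P (Suc n) h = key_at P n (P h) * radix + inspection_index P (P h)"

definition key :: "('a \<Rightarrow> 'a) \<Rightarrow> 'a \<Rightarrow> nat" where "key P h = key_at P (d h) h"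

definition half_edge_key :: "('a \<Rightarrow> 'a) \<Rightarrow> 'a \<Rightarrow> nat" where
  "half_edge_key P h = key P h * radix + inspection_index P h"

definition leftmost_parents :: "('a \<Rightarrow> 'a) \<Rightarrow> bool" where
  "leftmost_parents P \<longleftrightarrow>
     (\<forall>h\<in>H. 0 < d h \<longrightarrow> (\<forall>g\<in>parent_candidates h. half_edge_key P (P h) \<le> half_edge_key P g))"

context
  fixes P assumes P: "parent_choice P"
begin

lemma parent_in_H: "h \<in> H \<Longrightarrow> 0 < d h \<Longrightarrow> P h \<in> H"
  and alpha_parent_in_vertex: "h \<in> H \<Longrightarrow> 0 < d h \<Longrightarrow> \<alpha> (P h) \<in> vertex h"
  and d_parent: "h \<in> H \<Longrightarrow> 0 < d h \<Longrightarrow> Suc (d (P h)) = d h"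
  and parent_vertex: "h \<in> H \<Longrightarrow> g \<in> vertex h \<Longrightarrow> P g = P h"
  using P unfolding parent_choice_def by blast+

lemma inspection_start_in_vertex: "h \<in> H \<Longrightarrow> inspection_start P h \<in> vertex h"
proof (cases "d h = 0")
  case True then show "h \<in> H \<Longrightarrow> ?thesis" using d_eq_0_iff vertex_sym inspection_start_def by simp
next
  case False then show "h \<in> H \<Longrightarrow> ?thesis"
    using alpha_parent_in_vertex sigma_in_vertex_iff inspection_start_def by simp
qed

lemma inspection_start_vertex: "h \<in> H \<Longrightarrow> g \<in> vertex h \<Longrightarrow> inspection_start P g = inspection_start P h"
  unfolding inspection_start_def using parent_vertex d_vertex by simp

lemma inspection_index_less_deg: "h \<in> H \<Longrightarrow> inspection_index P h < deg h"
  and sigma_funpow_inspection_index: "h \<in> H \<Longrightarrow> (\<sigma> ^^ inspection_index P h) (inspection_start P h) = h"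
proof -
  assume h: "h \<in> H"
  have "h \<in> vertex (inspection_start P h)" using inspection_start_in_vertex h vertex_sym by blast
  then obtain i where i: "i < deg (inspection_start P h)" "h = (\<sigma> ^^ i) (inspection_start P h)"
    using vertex_index by blast
  have "deg (inspection_start P h) = deg h" using deg_eq inspection_start_in_vertex h by blast
  moreover have "inspection_index P h \<le> i"
    unfolding inspection_index_def using i by (metis (mono_tags, lifting) Least_le)
  ultimately show "inspection_index P h < deg h" using i by simp
  show "(\<sigma> ^^ inspection_index P h) (inspection_start P h) = h"
    unfolding inspection_index_def using i by (metis (mono_tags, lifting) LeastI)
qed

lemma inspection_index_sigma_funpow:
  assumes h: "h \<in> H" and i: "i < deg h"
  shows "inspection_index P ((\<sigma> ^^ i) (inspection_start P h)) = i"
proof -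
  let ?g = "(\<sigma> ^^ i) (inspection_start P h)"
  have sv: "inspection_start P h \<in> vertex h" using inspection_start_in_vertex h by blast
  have gv: "?g \<in> vertex h" using vertex_trans[OF sv sigma_funpow_in_vertex] .
  have gH: "?g \<in> H" using gv in_vertex_in_H h by blast
  have "(\<sigma> ^^ inspection_index P ?g) (inspection_start P h) = ?g" "inspection_index P ?g < deg h"
    using sigma_funpow_inspection_index[OF gH] inspection_index_less_deg[OF gH]
      inspection_start_vertex[OF h gv] deg_eq[OF gv] by auto
  then show ?thesis
    using sigma_funpow_inj_below_deg[of "inspection_index P ?g" "inspection_start P h" i] i deg_eq[OF sv]
    by simp
qed

lemma key_vertex: assumes "h \<in> H" "g \<in> vertex h" shows "key P g = key P h"
proof -
  have "d g = d h" using d_vertex assms by blast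
  then show ?thesis using parent_vertex[OF assms] unfolding key_def by (cases "d h") simp_all
qed

lemma key_eq_half_edge_key_parent:
  assumes "h \<in> H" "0 < d h" shows "key P h = half_edge_key P (P h)"
proof -
  obtain n where n: "d h = Suc n" using assms(2) not0_implies_Suc by blast
  then have "d (P h) = n" using d_parent[OF assms] by simp
  then show ?thesis using n unfolding key_def half_edge_key_def by simp
qed

lemma half_edge_key_less: "g \<in> H \<Longrightarrow> key P g < key P h \<Longrightarrow> half_edge_key P g < half_edge_key P h"
proof -
  assume g: "g \<in> H" "key P g < key P h"
  have "inspection_index P g < radix"
    using inspection_index_less_deg[OF g(1)] deg_le_card_H[OF g(1)] unfolding radix_def by simp
  then have "half_edge_key P g < Suc (key P g) * radix" unfolding half_edge_key_def by simp
  also have "\<dots> \<le> key P h * radix" using g(2) by (intro mult_le_mono1) simp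
  also have "\<dots> \<le> half_edge_key P h" unfolding half_edge_key_def by simp
  finally show ?thesis .
qed

lemma half_edge_key_inj:
  "g \<in> H \<Longrightarrow> h \<in> H \<Longrightarrow> d g = d h \<Longrightarrow> half_edge_key P g = half_edge_key P h \<Longrightarrow> g = h"
proof (induction "d h" arbitrary: g h)
  case 0
  then have "inspection_start P g = inspection_start P h" "inspection_index P g = inspection_index P h"
    unfolding inspection_start_def half_edge_key_def key_def by auto
  then show ?case using sigma_funpow_inspection_index[OF 0(2)] sigma_funpow_inspection_index[OF 0(3)] by metis
next
  case (Suc n)
  note gH = Suc.prems(1) and hH = Suc.prems(2)
  have pos_d: "0 < d g" "0 < d h" using Suc by auto
  have "key P g < key P h \<or> key P h < key P g \<or> key P g = key P h" by linarith
  then have key_eq: "key P g = key P h" using half_edge_key_less Suc.prems by (metis less_irrefl)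
  then have index_eq: "inspection_index P g = inspection_index P h"
    using Suc.prems(4) unfolding half_edge_key_def by simp
  have "half_edge_key P (P g) = half_edge_key P (P h)"
    using key_eq key_eq_half_edge_key_parent gH hH pos_d by simp
  moreover have "d (P g) = n" using d_parent[OF gH pos_d(1)] Suc.hyps(2) Suc.prems(3) by simp
  moreover have "d (P h) = n" using d_parent[OF hH pos_d(2)] Suc.hyps(2) by simp
  ultimately have "P g = P h"
    using Suc.hyps(1)[of "P h" "P g"] parent_in_H[OF gH pos_d(1)] parent_in_H[OF hH pos_d(2)] by simp
  then have "inspection_start P g = inspection_start P h" unfolding inspection_start_def using pos_d by simp
  then show ?case
    using index_eq sigma_funpow_inspection_index[OF gH] sigma_funpow_inspection_index[OF hH] by metis
qed

lemma key_inj: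
  assumes "g \<in> H" "h \<in> H" "d g = d h" "key P g = key P h" shows "g \<in> vertex h"
proof (cases "d h = 0")
  case True then show ?thesis using assms d_eq_0_iff vertex_sym vertex_trans by metis
next
  case False
  then have "half_edge_key P (P g) = half_edge_key P (P h)" using assms key_eq_half_edge_key_parent by simp
  moreover have "d (P g) = d (P h)" using d_parent assms False by (metis Suc_inject neq0_conv)
  ultimately have "P g = P h" using half_edge_key_inj parent_in_H assms False by simp
  then have "\<alpha> (P h) \<in> vertex g" "\<alpha> (P h) \<in> vertex h" using alpha_parent_in_vertex assms False by (metis neq0_conv)+
  then show ?thesis using vertex_eq in_own_vertex by metis
qed

end

end

section \<open>Breadth-first keys follow the motion function\<close>

context ascending_tree
begin

context
  fixes P assumes P: "parent_choice P" and parent_in_S: "\<And>h. h \<in> H \<Longrightarrow> 0 < d h \<Longrightarrow> P h \<in> S"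
begin

lemma alpha_parent_eq_entry: assumes h: "h \<in> H" "0 < d h" shows "\<alpha> (P h) = entry h"
proof -
  let ?x = "\<alpha> (P h)"
  have PH: "P h \<in> H" using parent_in_H[OF P h] .
  have xS: "?x \<in> S" using alpha_in_S parent_in_S h by blast
  have xv: "?x \<in> vertex h" using alpha_parent_in_vertex[OF P h] .
  have "\<not> tree_out ?x"
  proof
    assume "tree_out ?x"
    then have "d (\<alpha> ?x) = Suc (d ?x)" by (rule tree_out_ascends)
    moreover have "\<alpha> ?x = P h" using alpha_alpha PH by simp
    moreover have "d ?x = d h" using d_vertex h xv by simp
    ultimately show False using d_parent[OF P h] by simp
  qed
  then have "tree_in ?x" using tree_out_or_in xS by blast
  then show ?thesis using tree_in_eq_entry[OF h xv] by simp
qed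

lemma inspection_start_eq_sigma_entry: "h \<in> H \<Longrightarrow> 0 < d h \<Longrightarrow> inspection_start P h = \<sigma> (entry h)"
  using alpha_parent_eq_entry inspection_start_def by simp

lemma pos_inspection_start:
  assumes h: "h \<in> H" "0 < d h" shows "pos (inspection_start P h) = Suc (pos (P h))"
proof -
  have "\<alpha> (entry h) = P h" using alpha_parent_eq_entry[OF h] alpha_alpha parent_in_H[OF P h] by metis
  then show ?thesis using inspection_start_eq_sigma_entry[OF h] pos_sigma_entry[OF h] by simp
qed

lemma pos_inspection_mono:
  assumes h: "h \<in> H" and ij: "i < j" "j < deg h"
  shows "pos ((\<sigma> ^^ i) (inspection_start P h)) < pos ((\<sigma> ^^ j) (inspection_start P h))"
proof (cases "d h = 0")
  case True
  then have "vertex h = vertex r" using d_eq_0_iff h vertex_eq by blast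
  then show ?thesis using pos_root_vertex_mono ij True inspection_start_def by simp
next
  case False
  then show ?thesis using pos_turn_mono h ij inspection_start_eq_sigma_entry by simp
qed

lemma pos_less_iff_inspection_index_less:
  assumes g: "g \<in> H" and g': "g' \<in> vertex g"
  shows "pos g < pos g' \<longleftrightarrow> inspection_index P g < inspection_index P g'"
proof -
  have g'H: "g' \<in> H" using in_vertex_in_H g g' by blast
  let ?s = "inspection_start P g" and ?i = "inspection_index P g" and ?j = "inspection_index P g'"
  have gi: "(\<sigma> ^^ ?i) ?s = g" "?i < deg g"
    using sigma_funpow_inspection_index[OF P g] inspection_index_less_deg[OF P g] by auto
  have gj: "(\<sigma> ^^ ?j) ?s = g'" "?j < deg g"
    using sigma_funpow_inspection_index[OF P g'H] inspection_index_less_deg[OF P g'H]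
      inspection_start_vertex[OF P g g'] deg_eq[OF g'] by auto
  have "?i < ?j \<Longrightarrow> pos g < pos g'" using pos_inspection_mono[OF g] gi gj by metis
  moreover have "?j < ?i \<Longrightarrow> pos g' < pos g" using pos_inspection_mono[OF g] gi gj by metis
  moreover have "?i = ?j \<Longrightarrow> g = g'" using gi gj by metis
  ultimately show ?thesis by (metis less_irrefl linorder_neqE_nat order.asym)
qed

lemma pos_less_iff_inspection_start_less:
  assumes g: "g \<in> H" "0 < d g" and g': "g' \<in> H" "d g = d g'" and ne: "g' \<notin> vertex g"
  shows "pos g < pos g' \<longleftrightarrow> pos (inspection_start P g) < pos (inspection_start P g')"
proof -
  have g'_pos: "0 < d g'" using g g' by simp
  have ne': "g \<notin> vertex g'" using ne vertex_sym by blast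
  have "pos (inspection_start P g) \<noteq> pos (inspection_start P g')"
  proof
    assume "pos (inspection_start P g) = pos (inspection_start P g')"
    then have "inspection_start P g = inspection_start P g'"
      using pos_inj in_vertex_in_H inspection_start_in_vertex[OF P] g g' by metis
    then show False using inspection_start_in_vertex[OF P] g g' ne vertex_eq vertex_sym by metis
  qed
  then show ?thesis
    using vertex_blocks_separated[OF g g'(1) _ ne _ in_own_vertex in_own_vertex]
      vertex_blocks_separated[OF g'(1) g'_pos g(1) _ ne' _ in_own_vertex in_own_vertex]
      inspection_start_eq_sigma_entry g g'(1) g'_pos g'(2) by (metis linorder_neqE_nat order.asym)
qed

lemma pos_less_iff_half_edge_key_less:
  "g \<in> H \<Longrightarrow> g' \<in> H \<Longrightarrow> d g = d g' \<Longrightarrow> pos g < pos g' \<longleftrightarrow> half_edge_key P g < half_edge_key P g'"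
proof (induction "d g" arbitrary: g g' rule: less_induct)
  case less
  note gH = less.prems(1) and g'H = less.prems(2) and dd = less.prems(3)
  show ?case
  proof (cases "g' \<in> vertex g")
    case True
    then show ?thesis using key_vertex[OF P gH True] pos_less_iff_inspection_index_less[OF gH True]
      unfolding half_edge_key_def by simp
  next
    case False
    have g_pos: "0 < d g"
    proof (rule ccontr)
      assume "\<not> 0 < d g"
      then have "d g = 0" "d g' = 0" using dd by auto
      then have "g \<in> vertex r" "g' \<in> vertex r" using d_eq_0_iff gH g'H by auto
      then show False using False vertex_eq vertex_sym by metis
    qed
    have g'_pos: "0 < d g'" using g_pos dd by simp
    have "key P g \<noteq> key P g'" using key_inj[OF P g'H gH] dd False by metis
    have "pos g < pos g' \<longleftrightarrow> pos (inspection_start P g) < pos (inspection_start P g')"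
      using pos_less_iff_inspection_start_less[OF gH g_pos g'H dd False] .
    also have "\<dots> \<longleftrightarrow> pos (P g) < pos (P g')" using pos_inspection_start gH g'H g_pos g'_pos by simp
    also have "\<dots> \<longleftrightarrow> half_edge_key P (P g) < half_edge_key P (P g')"
    proof -
      have "d (P g) < d g" "d (P g) = d (P g')"
        using d_parent[OF P] gH g'H g_pos g'_pos dd by (metis lessI, metis Suc_inject)
      then show ?thesis using less.hyps parent_in_H[OF P] gH g'H g_pos g'_pos by blast
    qed
    also have "\<dots> \<longleftrightarrow> key P g < key P g'" using key_eq_half_edge_key_parent[OF P] gH g'H g_pos g'_pos by simp
    also have "\<dots> \<longleftrightarrow> half_edge_key P g < half_edge_key P g'"
      using half_edge_key_less[OF P] \<open>key P g \<noteq> key P g'\<close> gH g'H by (metis linorder_neqE_nat order.asym)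
    finally show ?thesis .
  qed
qed

lemma leftmost_parents_iff:
  "leftmost_parents P \<longleftrightarrow> (\<forall>h\<in>H. 0 < d h \<longrightarrow> (\<forall>g\<in>parent_candidates h. pos (P h) \<le> pos g))"
proof -
  have "half_edge_key P (P h) \<le> half_edge_key P g \<longleftrightarrow> pos (P h) \<le> pos g"
    if "h \<in> H" "0 < d h" "g \<in> parent_candidates h" for h g
  proof -
    have "g \<in> H" "Suc (d g) = d h" using that parent_candidates_def by auto
    moreover have "P h \<in> H" "Suc (d (P h)) = d h" using parent_in_H[OF P] d_parent[OF P] that by auto
    ultimately have "pos g < pos (P h) \<longleftrightarrow> half_edge_key P g < half_edge_key P (P h)"
      using pos_less_iff_half_edge_key_less by simp
    then show ?thesis by linarith
  qed
  then show ?thesis unfolding leftmost_parents_def by auto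
qed

end

end

section \<open>The rightmost BFS builds the tree of leftmost parents\<close>

context bipartite_covered_map
begin

context
  fixes P assumes P: "parent_choice P" and leftmost: "leftmost_parents P"
begin

definition bfs_less :: "'a \<Rightarrow> 'a \<Rightarrow> bool" where
  "bfs_less x y \<longleftrightarrow> d x < d y \<or> (d x = d y \<and> key P x < key P y)"

definition children :: "'a set \<Rightarrow> 'a set" where
  "children D = {c \<in> H. 0 < d c \<and> P c \<in> D}"

definition parent_edges :: "'a set \<Rightarrow> 'a set" where
  "parent_edges C = {x. \<exists>c\<in>C. x = P c \<or> x = \<alpha> (P c)}"

definition vertex_closed :: "'a set \<Rightarrow> bool" where
  "vertex_closed A \<longleftrightarrow> A \<subseteq> H \<and> (\<forall>x\<in>A. \<forall>y\<in>vertex x. y \<in> A)"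

definition bfs_closed :: "'a set \<Rightarrow> bool" where
  "bfs_closed D \<longleftrightarrow> D \<subseteq> H \<and> (\<forall>x\<in>D. \<forall>y\<in>H. bfs_less y x \<or> y \<in> vertex x \<longrightarrow> y \<in> D)"

text \<open>Between two steps of the BFS, the dead vertices form an initial segment D of the BFS
  order; the vertices of the tree are those of D, of the root vertex and the children of D,
  and the queue holds the inspection starts of the alive ones, in BFS order.\<close>

definition bfs_invariant :: "'a set \<Rightarrow> 'a bfs_state \<Rightarrow> bool" where
  "bfs_invariant D st \<longleftrightarrow> (case st of (V, E, Q) \<Rightarrow>
     bfs_closed D \<and> V = vertex ` (D \<union> children D \<union> vertex r) \<and> E = parent_edges (children D) \<and>
     sorted_wrt bfs_less Q \<and> set Q = inspection_start P ` ((children D \<union> vertex r) - D))"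

lemma bfs_less_vertex_left: "x \<in> H \<Longrightarrow> y \<in> vertex x \<Longrightarrow> bfs_less y z \<longleftrightarrow> bfs_less x z"
  unfolding bfs_less_def using d_vertex key_vertex[OF P] by simp
lemma bfs_less_vertex_right: "x \<in> H \<Longrightarrow> y \<in> vertex x \<Longrightarrow> bfs_less z y \<longleftrightarrow> bfs_less z x"
  unfolding bfs_less_def using d_vertex key_vertex[OF P] by simp
lemma bfs_less_irrefl: "\<not> bfs_less x x" unfolding bfs_less_def by simp
lemma bfs_less_trans: "bfs_less x y \<Longrightarrow> bfs_less y z \<Longrightarrow> bfs_less x z" unfolding bfs_less_def by auto
lemma bfs_less_asym: "bfs_less x y \<Longrightarrow> \<not> bfs_less y x" unfolding bfs_less_def by auto
lemma bfs_less_total: "x \<in> H \<Longrightarrow> y \<in> H \<Longrightarrow> bfs_less x y \<or> bfs_less y x \<or> y \<in> vertex x"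
  unfolding bfs_less_def using key_inj[OF P] by (metis linorder_neqE_nat)
lemma bfs_less_parent: "x \<in> H \<Longrightarrow> 0 < d x \<Longrightarrow> bfs_less (P x) x"
  unfolding bfs_less_def using d_parent[OF P] by (metis lessI)

lemma vertex_closed_image_iff: "vertex_closed A \<Longrightarrow> vertex c \<in> vertex ` A \<longleftrightarrow> c \<in> A"
  unfolding vertex_closed_def using in_own_vertex by (metis (no_types, lifting) image_iff vertex_eq)

lemma vertex_closed_vertex: "h \<in> H \<Longrightarrow> vertex_closed (vertex h)"
  unfolding vertex_closed_def using in_vertex_in_H vertex_trans by blast
lemma vertex_closed_children: "vertex_closed (children D)"
  unfolding vertex_closed_def children_def using in_vertex_in_H d_vertex parent_vertex[OF P] by auto
lemma vertex_closed_bfs_closed: "bfs_closed D \<Longrightarrow> vertex_closed D"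
  unfolding vertex_closed_def bfs_closed_def using in_vertex_in_H by blast
lemma vertex_closed_Un: "vertex_closed A \<Longrightarrow> vertex_closed B \<Longrightarrow> vertex_closed (A \<union> B)"
  unfolding vertex_closed_def by blast

lemma vertex_closed_children_root: "vertex_closed (children D \<union> vertex r)"
  using vertex_closed_Un vertex_closed_children vertex_closed_vertex[OF r_in_H] by blast

lemma inspection_start_idem: "x \<in> H \<Longrightarrow> inspection_start P (inspection_start P x) = inspection_start P x"
  using inspection_start_vertex[OF P] inspection_start_in_vertex[OF P] by blast

lemma d_root_vertex: "x \<in> vertex r \<Longrightarrow> d x = 0" using d_eq_0_iff in_vertex_in_H r_in_H by blast

lemma inspection_start_root_vertex: "x \<in> vertex r \<Longrightarrow> inspection_start P x = r"
  using d_root_vertex inspection_start_def by simp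

lemma parent_edges_Un: "parent_edges (A \<union> B) = parent_edges A \<union> parent_edges B"
  unfolding parent_edges_def by blast

lemma parent_edges_vertex:
  assumes c: "c \<in> H" shows "parent_edges (A \<union> vertex c) = parent_edges A \<union> {P c, \<alpha> (P c)}"
proof -
  have "parent_edges (vertex c) = {P c, \<alpha> (P c)}"
  proof
    show "parent_edges (vertex c) \<subseteq> {P c, \<alpha> (P c)}"
    proof
      fix x assume "x \<in> parent_edges (vertex c)"
      then obtain c' where c': "c' \<in> vertex c" "x = P c' \<or> x = \<alpha> (P c')"
        unfolding parent_edges_def by blast
      then show "x \<in> {P c, \<alpha> (P c)}" using parent_vertex[OF P c c'(1)] by auto
    qed
    show "{P c, \<alpha> (P c)} \<subseteq> parent_edges (vertex c)" unfolding parent_edges_def using in_own_vertex by blast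
  qed
  then show ?thesis using parent_edges_Un by simp
qed

lemma bfs_invariant_init: "bfs_invariant {} ({vertex r}, {}, [r])"
proof -
  have "vertex ` vertex r = {vertex r}" using in_own_vertex vertex_eq by auto
  moreover have "inspection_start P ` vertex r = {r}" using inspection_start_root_vertex in_own_vertex by auto
  moreover have "children {} = {}" "parent_edges {} = {}" unfolding children_def parent_edges_def by auto
  ultimately show ?thesis unfolding bfs_invariant_def bfs_closed_def by simp
qed

lemma bfs_invariant_queue_minimal:
  assumes I: "bfs_invariant D (V, E, s # Q)" and x: "x \<in> (children D \<union> vertex r) - D"
  shows "\<not> bfs_less x s"
proof
  assume lt: "bfs_less x s"
  have sorted: "sorted_wrt bfs_less (s # Q)"
    and queue: "set (s # Q) = inspection_start P ` ((children D \<union> vertex r) - D)"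
    using I unfolding bfs_invariant_def by auto
  have xH: "x \<in> H" using x vertex_closed_children_root unfolding vertex_closed_def by blast
  have sx: "inspection_start P x \<in> vertex x" using inspection_start_in_vertex[OF P xH] .
  have "inspection_start P x \<in> set (s # Q)" using queue x by blast
  then consider "inspection_start P x = s" | "inspection_start P x \<in> set Q" by auto
  then show False
  proof cases
    case 1
    then have "bfs_less s s" using lt bfs_less_vertex_left[OF xH sx] by simp
    then show False using bfs_less_irrefl by blast
  next
    case 2
    then have "bfs_less s (inspection_start P x)" using sorted by simp
    then have "bfs_less s x" using bfs_less_vertex_right[OF xH sx] by simp
    then show False using lt bfs_less_asym by blast
  qed
qed

lemma bfs_invariant_queue_head:
  assumes I: "bfs_invariant D (V, E, s # Q)"
  shows "s \<in> (children D \<union> vertex r) - D" "inspection_start P s = s" "s \<in> H"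
proof -
  have queue: "set (s # Q) = inspection_start P ` ((children D \<union> vertex r) - D)"
    and vD: "vertex_closed D"
    using I vertex_closed_bfs_closed unfolding bfs_invariant_def by auto
  obtain y where y: "y \<in> (children D \<union> vertex r) - D" "s = inspection_start P y" using queue by auto
  have yH: "y \<in> H" using y vertex_closed_children_root unfolding vertex_closed_def by blast
  have sv: "s \<in> vertex y" using y inspection_start_in_vertex[OF P yH] by simp
  have "s \<in> children D \<union> vertex r" using vertex_closed_children_root y sv unfolding vertex_closed_def by blast
  moreover have "s \<notin> D" using vD y vertex_sym sv unfolding vertex_closed_def by blast
  ultimately show "s \<in> (children D \<union> vertex r) - D" by blast
  show "inspection_start P s = s" using y inspection_start_idem yH by simp
  show "s \<in> H" using sv in_vertex_in_H yH by blast
qed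

lemma bfs_invariant_dead_eq:
  assumes I: "bfs_invariant D (V, E, s # Q)"
  shows "D = {x \<in> H. bfs_less x s}"
proof -
  have closed: "bfs_closed D" using I unfolding bfs_invariant_def by auto
  have s: "s \<in> H" "s \<notin> D" using bfs_invariant_queue_head[OF I] by auto
  have "x \<in> D" if "x \<in> H" "bfs_less x s" for x
    using that
  proof (induction "d x" arbitrary: x rule: less_induct)
    case less
    show ?case
    proof (cases "d x = 0")
      case True
      then have "x \<in> vertex r" using d_eq_0_iff less by blast
      then show ?thesis using bfs_invariant_queue_minimal[OF I] less by blast
    next
      case False
      then have "bfs_less (P x) s" using bfs_less_parent bfs_less_trans less by blast
      moreover have "d (P x) < d x" using d_parent[OF P] less False by (metis lessI neq0_conv)
      ultimately have "P x \<in> D" using less parent_in_H[OF P] False by blast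
      then have "x \<in> children D" using less False unfolding children_def by simp
      then show ?thesis using bfs_invariant_queue_minimal[OF I] less by blast
    qed
  qed
  moreover have "bfs_less x s" if "x \<in> D" for x
  proof (rule ccontr)
    have xH: "x \<in> H" using that closed unfolding bfs_closed_def by blast
    assume "\<not> bfs_less x s"
    then have "bfs_less s x \<or> s \<in> vertex x" using bfs_less_total[OF xH s(1)] by blast
    then show False using closed that s unfolding bfs_closed_def by blast
  qed
  ultimately show ?thesis using closed unfolding bfs_closed_def by blast
qed

lemma bfs_invariant_root_vertex:
  assumes I: "bfs_invariant D (V, E, s # Q)" shows "vertex r \<subseteq> D \<union> vertex s"
proof
  fix x assume x: "x \<in> vertex r"
  have xH: "x \<in> H" using x in_vertex_in_H r_in_H by blast
  have sH: "s \<in> H" using bfs_invariant_queue_head(3)[OF I] .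
  show "x \<in> D \<union> vertex s"
  proof (cases "d s = 0")
    case True
    then have "s \<in> vertex r" using d_eq_0_iff sH by blast
    then have "x \<in> vertex s" using x vertex_eq by blast
    then show ?thesis by blast
  next
    case False
    then have "bfs_less x s" using d_root_vertex[OF x] bfs_less_def by simp
    then show ?thesis using bfs_invariant_dead_eq[OF I] xH by blast
  qed
qed

text \<open>The BFS state while the vertex of s is inspected, after its first i half-edges.\<close>

definition children_upto :: "'a set \<Rightarrow> 'a \<Rightarrow> nat \<Rightarrow> 'a set" where
  "children_upto D s i =
     children D \<union> {c \<in> H. 0 < d c \<and> P c \<in> vertex s \<and> inspection_index P (P c) < i}"

definition inspection_invariant :: "'a set \<Rightarrow> 'a \<Rightarrow> nat \<Rightarrow> 'a bfs_state \<Rightarrow> bool" where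
  "inspection_invariant D s i st \<longleftrightarrow> (case st of (V, E, Q) \<Rightarrow>
     V = vertex ` ((D \<union> vertex s) \<union> children_upto D s i \<union> vertex r) \<and>
     E = parent_edges (children_upto D s i) \<and> sorted_wrt bfs_less Q \<and>
     set Q = inspection_start P ` (children_upto D s i - (D \<union> vertex s)))"

lemma vertex_closed_children_upto: "s \<in> H \<Longrightarrow> vertex_closed (children_upto D s i)"
proof -
  assume "s \<in> H"
  have "vertex_closed {c \<in> H. 0 < d c \<and> P c \<in> vertex s \<and> inspection_index P (P c) < i}"
    unfolding vertex_closed_def using in_vertex_in_H d_vertex parent_vertex[OF P] by auto
  then show ?thesis unfolding children_upto_def using vertex_closed_Un vertex_closed_children by blast
qed

lemma children_of_half_edge:
  assumes x: "x \<in> H"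
  shows "{c \<in> H. 0 < d c \<and> P c = x} = (if 0 < d (\<alpha> x) \<and> P (\<alpha> x) = x then vertex (\<alpha> x) else {})"
proof -
  have child: "c \<in> vertex (\<alpha> x) \<and> 0 < d (\<alpha> x) \<and> P (\<alpha> x) = x" if "c \<in> H" "0 < d c" "P c = x" for c
  proof -
    have "\<alpha> x \<in> vertex c" using alpha_parent_in_vertex[OF P that(1,2)] that(3) by simp
    moreover from this have "c \<in> vertex (\<alpha> x)" by (rule vertex_sym)
    ultimately show ?thesis using d_vertex[OF that(1)] parent_vertex[OF P that(1)] that by simp
  qed
  show ?thesis
  proof (cases "0 < d (\<alpha> x) \<and> P (\<alpha> x) = x")
    case True
    have "c \<in> H \<and> 0 < d c \<and> P c = x" if "c \<in> vertex (\<alpha> x)" for c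
    proof -
      have "c \<in> H" using in_vertex_in_H[OF alpha_in_H[OF x] that] .
      moreover have "d c = d (\<alpha> x)" using d_vertex[OF alpha_in_H[OF x] that] .
      moreover have "P c = P (\<alpha> x)" using parent_vertex[OF P alpha_in_H[OF x] that] .
      ultimately show ?thesis using True by simp
    qed
    then have "{c \<in> H. 0 < d c \<and> P c = x} = vertex (\<alpha> x)" using child by blast
    then show ?thesis by (simp only: if_P[OF True])
  next
    case False
    then have "{c \<in> H. 0 < d c \<and> P c = x} = {}" using child by blast
    then show ?thesis by (simp only: if_not_P[OF False])
  qed
qed

lemma bfs_invariant_queue_tail:
  assumes I: "bfs_invariant D (V, E, s # Q)"
  shows "set Q = inspection_start P ` (children D - (D \<union> vertex s))"
proof -
  note head = bfs_invariant_queue_head[OF I]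
  have sorted: "sorted_wrt bfs_less (s # Q)"
    and queue: "set (s # Q) = inspection_start P ` ((children D \<union> vertex r) - D)"
    using I unfolding bfs_invariant_def by auto
  have AH: "children D \<union> vertex r \<subseteq> H" using vertex_closed_children_root unfolding vertex_closed_def by blast
  have s_notin: "s \<notin> set Q" using sorted bfs_less_irrefl by auto
  show ?thesis
  proof
    show "set Q \<subseteq> inspection_start P ` (children D - (D \<union> vertex s))"
    proof
      fix q assume q: "q \<in> set Q"
      then obtain y where y: "y \<in> (children D \<union> vertex r) - D" "q = inspection_start P y" using queue by auto
      have "y \<notin> vertex s"
      proof
        assume "y \<in> vertex s"
        then have "inspection_start P y = s" using inspection_start_vertex[OF P head(3)] head(2) by simp
        then show False using y q s_notin by simp
      qed
      moreover have "y \<notin> vertex r" using bfs_invariant_root_vertex[OF I] y \<open>y \<notin> vertex s\<close> by blast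
      ultimately show "q \<in> inspection_start P ` (children D - (D \<union> vertex s))" using y by blast
    qed
    show "inspection_start P ` (children D - (D \<union> vertex s)) \<subseteq> set Q"
    proof
      fix q assume "q \<in> inspection_start P ` (children D - (D \<union> vertex s))"
      then obtain y where y: "y \<in> children D" "y \<notin> D" "y \<notin> vertex s" "q = inspection_start P y" by blast
      have yH: "y \<in> H" using y AH by blast
      have "q \<in> set (s # Q)" using queue y by blast
      moreover have "q \<noteq> s"
      proof
        assume "q = s"
        then have "s \<in> vertex y" using inspection_start_in_vertex[OF P yH] y by simp
        then show False using y vertex_sym by blast
      qed
      ultimately show "q \<in> set Q" by simp
    qed
  qed
qed

lemma inspection_invariant_start:
  assumes I: "bfs_invariant D (V, E, s # Q)"
  shows "inspection_invariant D s 0 (V, E, Q)"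
proof -
  note head = bfs_invariant_queue_head[OF I]
  have V: "V = vertex ` (D \<union> children D \<union> vertex r)" and E: "E = parent_edges (children D)"
    and sorted: "sorted_wrt bfs_less (s # Q)"
    using I unfolding bfs_invariant_def by auto
  have children_0: "children_upto D s 0 = children D" unfolding children_upto_def by simp
  have "vertex ` ((D \<union> vertex s) \<union> children D \<union> vertex r) =
      vertex ` (D \<union> children D \<union> vertex r) \<union> vertex ` vertex s" by blast
  moreover have "vertex ` vertex s = {vertex s}" using vertex_eq in_own_vertex by blast
  moreover have "vertex s \<in> vertex ` (D \<union> children D \<union> vertex r)" using head(1) by blast
  ultimately have V': "V = vertex ` ((D \<union> vertex s) \<union> children D \<union> vertex r)" using V by auto
  then show ?thesis
    unfolding inspection_invariant_def using E sorted children_0 bfs_invariant_queue_tail[OF I] by simp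
qed

context
  fixes D V0 E0 Q0 s i V E Q
  assumes I: "bfs_invariant D (V0, E0, s # Q0)" and i: "i < deg s"
    and st: "inspection_invariant D s i (V, E, Q)"
begin

abbreviation inspected where "inspected \<equiv> (\<sigma> ^^ i) s"
abbreviation neighbour where "neighbour \<equiv> \<alpha> inspected"

private lemma s_in_H: "s \<in> H" using bfs_invariant_queue_head(3)[OF I] .
private lemma dead_eq: "D = {x \<in> H. bfs_less x s}" using bfs_invariant_dead_eq[OF I] .
private lemma inspected_in_vertex: "inspected \<in> vertex s" by (rule sigma_funpow_in_vertex)
private lemma inspected_in_H: "inspected \<in> H" using inspected_in_vertex in_vertex_in_H s_in_H by blast
private lemma neighbour_in_H: "neighbour \<in> H" using alpha_in_H inspected_in_H by blast
private lemma d_inspected: "d inspected = d s" using d_vertex s_in_H inspected_in_vertex by blast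
private lemma key_inspected: "key P inspected = key P s" using key_vertex[OF P s_in_H inspected_in_vertex] .
private lemma inspection_index_inspected: "inspection_index P inspected = i"
  using inspection_index_sigma_funpow[OF P s_in_H i] bfs_invariant_queue_head(2)[OF I] by simp

lemma children_upto_Suc:
  "children_upto D s (Suc i) = children_upto D s i \<union> {c \<in> H. 0 < d c \<and> P c = inspected}"
proof -
  have "P c \<in> vertex s \<and> inspection_index P (P c) = i \<longleftrightarrow> P c = inspected" if "c \<in> H" "0 < d c" for c
  proof
    assume c: "P c \<in> vertex s \<and> inspection_index P (P c) = i"
    have "inspection_start P (P c) = s"
      using inspection_start_vertex[OF P s_in_H] c bfs_invariant_queue_head(2)[OF I] by simp
    then show "P c = inspected"
      using sigma_funpow_inspection_index[OF P parent_in_H[OF P that]] c by simp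
  qed (use inspected_in_vertex inspection_index_inspected in simp)
  then show ?thesis unfolding children_upto_def by (auto simp: less_Suc_eq)
qed

private lemma vertex_closed_dead_s: "vertex_closed (D \<union> vertex s)"
  using vertex_closed_Un vertex_closed_bfs_closed vertex_closed_vertex[OF s_in_H] I
  unfolding bfs_invariant_def by auto

lemma neighbour_in_tree_iff:
  "vertex neighbour \<in> V \<longleftrightarrow> neighbour \<in> (D \<union> vertex s) \<union> children_upto D s i \<union> vertex r"
proof -
  have "vertex_closed ((D \<union> vertex s) \<union> children_upto D s i \<union> vertex r)"
    using vertex_closed_dead_s vertex_closed_Un vertex_closed_children_upto[OF s_in_H]
      vertex_closed_vertex[OF r_in_H] by blast
  then show ?thesis using st vertex_closed_image_iff unfolding inspection_invariant_def by auto
qed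

lemma new_child_not_in_tree:
  assumes child: "0 < d neighbour" "P neighbour = inspected"
  shows "neighbour \<notin> (D \<union> vertex s) \<union> children_upto D s i \<union> vertex r"
proof -
  have d_child: "d neighbour = Suc (d s)" using d_parent[OF P neighbour_in_H] child d_inspected by simp
  have "neighbour \<notin> vertex r" using d_root_vertex child by auto
  moreover have "neighbour \<notin> D" using dead_eq d_child bfs_less_def by auto
  moreover have "neighbour \<notin> vertex s" using d_vertex s_in_H d_child by fastforce
  moreover have "neighbour \<notin> children D"
  proof
    assume "neighbour \<in> children D"
    then have "bfs_less inspected s" using child dead_eq unfolding children_def by simp
    then show False using bfs_less_vertex_left[OF s_in_H inspected_in_vertex] bfs_less_irrefl by simp
  qed
  moreover have "\<not> inspection_index P (P neighbour) < i" using child inspection_index_inspected by simp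
  ultimately show ?thesis unfolding children_upto_def by blast
qed

lemma queue_before_new_child:
  assumes child: "0 < d neighbour" "P neighbour = inspected" and q: "q \<in> set Q"
  shows "bfs_less q (inspection_start P neighbour)"
proof -
  obtain y where y: "y \<in> children_upto D s i" "y \<notin> D \<union> vertex s" "q = inspection_start P y"
    using st q unfolding inspection_invariant_def by auto
  have yC: "y \<in> H" "0 < d y" using y(1) unfolding children_upto_def children_def by auto
  have key_y: "key P y = half_edge_key P (P y)" using key_eq_half_edge_key_parent[OF P yC] .
  have key_child: "key P neighbour = half_edge_key P inspected"
    using key_eq_half_edge_key_parent[OF P neighbour_in_H child(1)] child(2) by simp
  have d_y: "d y = Suc (d (P y))" using d_parent[OF P yC] by simp
  have d_child: "d neighbour = Suc (d s)" using d_parent[OF P neighbour_in_H] child d_inspected by simp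
  have "bfs_less y neighbour"
  proof (cases "P y \<in> D")
    case True
    then have "bfs_less (P y) inspected"
      using dead_eq bfs_less_vertex_right[OF s_in_H inspected_in_vertex] by simp
    then show ?thesis unfolding bfs_less_def
      using d_y d_child d_inspected key_y key_child half_edge_key_less[OF P parent_in_H[OF P yC]] by auto
  next
    case False
    then have Py: "P y \<in> vertex s" "inspection_index P (P y) < i"
      using y(1) unfolding children_upto_def children_def by auto
    have "key P (P y) = key P inspected" using key_vertex[OF P s_in_H Py(1)] key_inspected by simp
    then have "half_edge_key P (P y) < half_edge_key P inspected"
      using Py inspection_index_inspected unfolding half_edge_key_def by simp
    moreover have "d (P y) = d s" using d_vertex s_in_H Py by blast
    ultimately show ?thesis unfolding bfs_less_def using d_y d_child key_y key_child by simp
  qed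
  then show ?thesis
    using y bfs_less_vertex_left[OF yC(1)] bfs_less_vertex_right[OF neighbour_in_H]
      inspection_start_in_vertex[OF P] yC(1) neighbour_in_H by metis
qed

lemma inspection_step_new_child:
  assumes child: "0 < d neighbour" "P neighbour = inspected"
  shows "inspection_invariant D s (Suc i) (inspect \<sigma> \<alpha> (V, E, Q) inspected)"
proof -
  let ?D' = "D \<union> vertex s" and ?c = neighbour
  have V: "V = vertex ` (?D' \<union> children_upto D s i \<union> vertex r)" and E: "E = parent_edges (children_upto D s i)"
    and sorted: "sorted_wrt bfs_less Q" and queue: "set Q = inspection_start P ` (children_upto D s i - ?D')"
    using st unfolding inspection_invariant_def by auto
  have new: "children_upto D s (Suc i) = children_upto D s i \<union> vertex ?c"
    using children_upto_Suc children_of_half_edge[OF inspected_in_H] child by simp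
  have "inspection_start P ?c = \<sigma> ?c" using child inspection_start_def by simp
  then have step: "inspect \<sigma> \<alpha> (V, E, Q) inspected =
      (insert (vertex ?c) V, E \<union> {inspected, ?c}, Q @ [inspection_start P ?c])"
    unfolding inspect_def using neighbour_in_tree_iff new_child_not_in_tree[OF child] by simp
  have "vertex ` vertex ?c = {vertex ?c}" using vertex_eq in_own_vertex by blast
  then have V': "insert (vertex ?c) V = vertex ` (?D' \<union> children_upto D s (Suc i) \<union> vertex r)"
    using V new by (simp add: image_Un Un_ac)
  have E': "E \<union> {inspected, ?c} = parent_edges (children_upto D s (Suc i))"
    using E new parent_edges_vertex[OF neighbour_in_H] child by simp
  have sorted': "sorted_wrt bfs_less (Q @ [inspection_start P ?c])"
    using sorted queue_before_new_child[OF child] by (simp add: sorted_wrt_append)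
  have "vertex ?c \<inter> ?D' = {}"
  proof -
    have "?c \<in> ?D'" if "x \<in> vertex ?c" "x \<in> ?D'" for x
      using vertex_closed_dead_s vertex_sym[OF that(1)] that(2) unfolding vertex_closed_def by blast
    then show ?thesis using new_child_not_in_tree[OF child] by blast
  qed
  then have "children_upto D s (Suc i) - ?D' = (children_upto D s i - ?D') \<union> vertex ?c"
    using new by blast
  moreover have "inspection_start P ` vertex ?c = {inspection_start P ?c}"
    using inspection_start_vertex[OF P neighbour_in_H] in_own_vertex by blast
  ultimately have queue': "set (Q @ [inspection_start P ?c]) =
      inspection_start P ` (children_upto D s (Suc i) - ?D')" using queue by auto
  show ?thesis unfolding inspection_invariant_def step using V' E' sorted' queue' by simp
qed

lemma non_child_in_tree:
  assumes not_child: "\<not> (0 < d neighbour \<and> P neighbour = inspected)"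
  shows "neighbour \<in> (D \<union> vertex s) \<union> children_upto D s i \<union> vertex r"
proof (cases "d inspected = Suc (d neighbour)")
  case True
  then have "bfs_less neighbour s" using d_inspected bfs_less_def by simp
  then show ?thesis using dead_eq neighbour_in_H by blast
next
  case False
  then have d_child: "d neighbour = Suc (d inspected)" using d_alpha_cases inspected_in_H by blast
  then have child_pos: "0 < d neighbour" by simp
  have P_ne: "P neighbour \<noteq> inspected" using not_child child_pos by simp
  have PH: "P neighbour \<in> H" using parent_in_H[OF P neighbour_in_H child_pos] .
  have d_P: "d (P neighbour) = d inspected" using d_parent[OF P neighbour_in_H child_pos] d_child by simp
  have "inspected \<in> parent_candidates neighbour"
    unfolding parent_candidates_def using inspected_in_H alpha_alpha in_own_vertex d_child by simp
  then have "half_edge_key P (P neighbour) \<le> half_edge_key P inspected"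
    using leftmost neighbour_in_H child_pos unfolding leftmost_parents_def by blast
  moreover have "half_edge_key P (P neighbour) \<noteq> half_edge_key P inspected"
    using half_edge_key_inj[OF P PH inspected_in_H d_P] P_ne by blast
  ultimately have key_lt: "half_edge_key P (P neighbour) < half_edge_key P inspected" by simp
  consider "key P (P neighbour) < key P s" | "key P (P neighbour) = key P s" | "key P s < key P (P neighbour)"
    by linarith
  then show ?thesis
  proof cases
    case 1
    then have "P neighbour \<in> D" using dead_eq d_P d_inspected PH bfs_less_def by simp
    then show ?thesis unfolding children_upto_def children_def using neighbour_in_H child_pos by blast
  next
    case 2
    then have P_in: "P neighbour \<in> vertex s" using key_inj[OF P PH s_in_H] d_P d_inspected by simp
    then have "inspection_index P (P neighbour) < i"
      using key_lt 2 key_inspected inspection_index_inspected unfolding half_edge_key_def by simp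
    then show ?thesis unfolding children_upto_def using neighbour_in_H child_pos P_in by blast
  next
    case 3
    then have "half_edge_key P inspected < half_edge_key P (P neighbour)"
      using half_edge_key_less[OF P inspected_in_H] key_inspected by simp
    then show ?thesis using key_lt by simp
  qed
qed

lemma inspection_invariant_step:
  "inspection_invariant D s (Suc i) (inspect \<sigma> \<alpha> (V, E, Q) inspected)"
proof (cases "0 < d neighbour \<and> P neighbour = inspected")
  case True
  then show ?thesis using inspection_step_new_child by blast
next
  case False
  then have "children_upto D s (Suc i) = children_upto D s i"
    by (simp only: children_upto_Suc children_of_half_edge[OF inspected_in_H] if_not_P[OF False]
        if_False Un_empty_right)
  moreover have "inspect \<sigma> \<alpha> (V, E, Q) inspected = (V, E, Q)"
    unfolding inspect_def using neighbour_in_tree_iff non_child_in_tree[OF False] by simp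
  ultimately show ?thesis using st unfolding inspection_invariant_def by simp
qed

end

lemma inspection_invariant_fold:
  assumes I: "bfs_invariant D (V0, E0, s # Q0)"
  shows "i \<le> deg s \<Longrightarrow>
    inspection_invariant D s i (foldl (inspect \<sigma> \<alpha>) (V0, E0, Q0) (map (\<lambda>j. (\<sigma> ^^ j) s) [0..<i]))"
proof (induction i)
  case 0 then show ?case using inspection_invariant_start[OF I] by simp
next
  case (Suc i)
  obtain V E Q where st: "foldl (inspect \<sigma> \<alpha>) (V0, E0, Q0) (map (\<lambda>j. (\<sigma> ^^ j) s) [0..<i]) = (V, E, Q)"
    by (metis prod_cases3)
  have "inspection_invariant D s i (V, E, Q)" using Suc st by simp
  then show ?case using inspection_invariant_step[OF I] Suc.prems st by simp
qed

lemma bfs_closed_add_head: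
  assumes I: "bfs_invariant D (V, E, s # Q)"
  shows "bfs_closed (D \<union> vertex s)"
proof -
  have sH: "s \<in> H" using bfs_invariant_queue_head(3)[OF I] .
  have dead: "D = {x \<in> H. bfs_less x s}" using bfs_invariant_dead_eq[OF I] .
  let ?D' = "D \<union> vertex s"
  show ?thesis unfolding bfs_closed_def
  proof (intro conjI ballI impI)
    show "?D' \<subseteq> H" using dead in_vertex_in_H sH by auto
    fix x y assume x: "x \<in> ?D'" and y: "y \<in> H" and yx: "bfs_less y x \<or> y \<in> vertex x"
    show "y \<in> ?D'"
    proof (cases "x \<in> D")
      case True
      then have "bfs_less x s" "x \<in> H" using dead by auto
      then have "bfs_less y s" using yx bfs_less_trans bfs_less_vertex_left by metis
      then show ?thesis using dead y by blast
    next
      case False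
      then have xv: "x \<in> vertex s" using x by simp
      show ?thesis
      proof (cases "bfs_less y x")
        case True
        then have "bfs_less y s" using bfs_less_vertex_right[OF sH xv] by simp
        then show ?thesis using dead y by blast
      next
        case False
        then have "y \<in> vertex x" using yx by simp
        then show ?thesis using vertex_trans xv by blast
      qed
    qed
  qed
qed

lemma bfs_invariant_step:
  assumes I: "bfs_invariant D (V, E, s # Q)"
  shows "bfs_invariant (D \<union> vertex s) (bfs_step \<sigma> \<alpha> (V, E, s # Q))"
proof -
  let ?D' = "D \<union> vertex s"
  obtain V' E' Q' where step: "bfs_step \<sigma> \<alpha> (V, E, s # Q) = (V', E', Q')" by (metis prod_cases3)
  have "inspection_invariant D s (deg s) (V', E', Q')"
    using inspection_invariant_fold[OF I, of "deg s"] step unfolding bfs_step_def ccw_list_def by simp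
  moreover have "children_upto D s (deg s) = children ?D'"
  proof -
    have "inspection_index P (P c) < deg s" if "c \<in> H" "0 < d c" "P c \<in> vertex s" for c
      using inspection_index_less_deg[OF P parent_in_H[OF P that(1,2)]] deg_eq[OF that(3)] by simp
    then show ?thesis unfolding children_upto_def children_def by auto
  qed
  moreover have "(children ?D' \<union> vertex r) - ?D' = children ?D' - ?D'"
    using bfs_invariant_root_vertex[OF I] by blast
  moreover have "bfs_closed ?D'" using bfs_closed_add_head[OF I] .
  ultimately show ?thesis unfolding bfs_invariant_def inspection_invariant_def step
    by (simp add: Un_absorb2 Un_assoc)
qed

lemma bfs_invariant_iterate:
  "\<exists>D. bfs_invariant D ((bfs_step \<sigma> \<alpha> ^^ j) ({vertex r}, {}, [r])) \<and>
     (snd (snd ((bfs_step \<sigma> \<alpha> ^^ j) ({vertex r}, {}, [r]))) = [] \<or> j \<le> card D)"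
proof (induction j)
  case 0 then show ?case using bfs_invariant_init by auto
next
  case (Suc j)
  then obtain D where D: "bfs_invariant D ((bfs_step \<sigma> \<alpha> ^^ j) ({vertex r}, {}, [r]))"
    "snd (snd ((bfs_step \<sigma> \<alpha> ^^ j) ({vertex r}, {}, [r]))) = [] \<or> j \<le> card D" by blast
  obtain V E Q where st: "(bfs_step \<sigma> \<alpha> ^^ j) ({vertex r}, {}, [r]) = (V, E, Q)" by (metis prod_cases3)
  show ?case
  proof (cases Q)
    case Nil
    then have "bfs_step \<sigma> \<alpha> (V, E, Q) = (V, E, Q)" unfolding bfs_step_def by simp
    then show ?thesis using D st Nil by auto
  next
    case (Cons s Q')
    have I: "bfs_invariant D (V, E, s # Q')" using D st Cons by simp
    have I': "bfs_invariant (D \<union> vertex s) (bfs_step \<sigma> \<alpha> (V, E, s # Q'))" using bfs_invariant_step[OF I] .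
    have "D \<union> vertex s \<subseteq> H" using I' unfolding bfs_invariant_def bfs_closed_def by (auto split: prod.splits)
    then have "finite (D \<union> vertex s)" using finite_H finite_subset by blast
    moreover have "s \<notin> D" using bfs_invariant_queue_head(1)[OF I] by blast
    ultimately have "card D < card (D \<union> vertex s)" using in_own_vertex
      by (metis Un_iff psubsetI psubset_card_mono sup_ge1)
    moreover have "j \<le> card D" using D st Cons by simp
    ultimately show ?thesis using I' st Cons by (intro exI[of _ "D \<union> vertex s"]) simp
  qed
qed

theorem rightmost_bfs_tree_eq_tree_edges: "rightmost_bfs_tree H \<sigma> \<alpha> r = tree_edges P"
proof -
  obtain D where D: "bfs_invariant D ((bfs_step \<sigma> \<alpha> ^^ card H) ({vertex r}, {}, [r]))"
    "snd (snd ((bfs_step \<sigma> \<alpha> ^^ card H) ({vertex r}, {}, [r]))) = [] \<or> card H \<le> card D"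
    using bfs_invariant_iterate by blast
  obtain V E Q where st: "(bfs_step \<sigma> \<alpha> ^^ card H) ({vertex r}, {}, [r]) = (V, E, Q)"
    by (metis prod_cases3)
  have I: "bfs_closed D" "E = parent_edges (children D)"
    "set Q = inspection_start P ` ((children D \<union> vertex r) - D)"
    using D st unfolding bfs_invariant_def by auto
  have DH: "D \<subseteq> H" using I bfs_closed_def by blast
  have "Q = []"
  proof (rule ccontr)
    assume "Q \<noteq> []"
    then have "card H \<le> card D" using D st by simp
    then have "D = H" using card_seteq[OF finite_H DH] by simp
    then have "set Q = {}"
      using I vertex_closed_children_root unfolding vertex_closed_def by auto
    then show False using \<open>Q \<noteq> []\<close> by simp
  qed
  then have sub: "children D \<union> vertex r \<subseteq> D" using I by auto
  have HD: "x \<in> D" if "x \<in> H" for x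
    using that
  proof (induction "d x" arbitrary: x rule: less_induct)
    case less
    show ?case
    proof (cases "d x = 0")
      case True then show ?thesis using d_eq_0_iff less sub by blast
    next
      case False
      then have "d (P x) < d x" "P x \<in> H"
        using d_parent[OF P] parent_in_H[OF P] less by (metis lessI neq0_conv)+
      then have "P x \<in> D" using less by blast
      then have "x \<in> children D" using less False children_def by simp
      then show ?thesis using sub by blast
    qed
  qed
  have "children D = {c \<in> H. 0 < d c}" using HD parent_in_H[OF P] unfolding children_def by auto
  then have "E = tree_edges P" using I unfolding parent_edges_def tree_edges_def by auto
  then show ?thesis unfolding rightmost_bfs_tree_def using st by simp
qed

end

end

section \<open>Existence of leftmost parents\<close>

context bipartite_covered_map
begin

text \<open>Keys at distance n only depend on the parents at distance at most n, so leftmost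
  parents can be chosen level by level.\<close>

fun leftmost_parent_upto :: "nat \<Rightarrow> 'a \<Rightarrow> 'a" where
  "leftmost_parent_upto 0 = (\<lambda>h. r)"
| "leftmost_parent_upto (Suc n) = (\<lambda>h. if d h = Suc n
     then (SOME g. g \<in> parent_candidates h \<and>
       (\<forall>g'\<in>parent_candidates h. half_edge_key (leftmost_parent_upto n) g \<le> half_edge_key (leftmost_parent_upto n) g'))
     else leftmost_parent_upto n h)"

definition leftmost_parent :: "'a \<Rightarrow> 'a" where "leftmost_parent h = leftmost_parent_upto (d h) h"

lemma leftmost_parent_upto_eq: "d h \<le> n \<Longrightarrow> leftmost_parent_upto n h = leftmost_parent h"
proof (induction n)
  case 0 then show ?case unfolding leftmost_parent_def by simp
next
  case (Suc n) then show ?case unfolding leftmost_parent_def by (cases "d h = Suc n") simp_all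
qed

lemma parent_candidates_vertex: "h \<in> H \<Longrightarrow> g \<in> vertex h \<Longrightarrow> parent_candidates g = parent_candidates h"
  unfolding parent_candidates_def using vertex_eq d_vertex by simp

lemma leftmost_parent_minimal:
  assumes h: "h \<in> H" "d h = Suc n"
  shows "leftmost_parent h \<in> parent_candidates h"
    "\<forall>g\<in>parent_candidates h. half_edge_key (leftmost_parent_upto n) (leftmost_parent h)
       \<le> half_edge_key (leftmost_parent_upto n) g"
proof -
  let ?min = "\<lambda>g. g \<in> parent_candidates h \<and>
      (\<forall>g'\<in>parent_candidates h. half_edge_key (leftmost_parent_upto n) g \<le> half_edge_key (leftmost_parent_upto n) g')"
  obtain g where "g \<in> H" "d g = n" "\<alpha> g \<in> vertex h" using d_SucE h by blast
  then have "g \<in> parent_candidates h" unfolding parent_candidates_def using h by simp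
  then have "\<exists>g. ?min g" using ex_has_least_nat[of "\<lambda>g. g \<in> parent_candidates h"] by blast
  moreover have "leftmost_parent h = (SOME g. ?min g)" unfolding leftmost_parent_def using h by simp
  ultimately have "?min (leftmost_parent h)" using someI_ex[of ?min] by simp
  then show "leftmost_parent h \<in> parent_candidates h"
    "\<forall>g\<in>parent_candidates h. half_edge_key (leftmost_parent_upto n) (leftmost_parent h)
       \<le> half_edge_key (leftmost_parent_upto n) g" by blast+
qed

lemma parent_choice_leftmost_parent: "parent_choice leftmost_parent"
proof -
  have "leftmost_parent h \<in> parent_candidates h" if "h \<in> H" "0 < d h" for h
    using leftmost_parent_minimal(1)[OF that(1)] that(2) not0_implies_Suc by blast
  moreover have "leftmost_parent g = leftmost_parent h" if h: "h \<in> H" and g: "g \<in> vertex h" for h g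
  proof -
    have "d g = d h" using d_vertex h g by blast
    then show ?thesis using parent_candidates_vertex[OF h g] unfolding leftmost_parent_def
      by (cases "d h") simp_all
  qed
  ultimately show ?thesis unfolding parent_choice_def parent_candidates_def by blast
qed

lemma half_edge_key_agree:
  assumes P: "parent_choice P" and agree: "\<And>x. x \<in> H \<Longrightarrow> d x \<le> n \<Longrightarrow> P x = P' x"
    and g: "g \<in> H" "d g \<le> n"
  shows "half_edge_key P g = half_edge_key P' g"
proof -
  have start: "inspection_start P g = inspection_start P' g" if "g \<in> H" "d g \<le> n" for g
    unfolding inspection_start_def using agree that by simp
  have index: "inspection_index P g = inspection_index P' g" if "g \<in> H" "d g \<le> n" for g
    unfolding inspection_index_def using start that by simp
  have "key_at P m g = key_at P' m g" if "g \<in> H" "d g = m" "m \<le> n" for m g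
    using that
  proof (induction m arbitrary: g)
    case (Suc m)
    have g_pos: "0 < d g" using Suc by simp
    have PH: "P g \<in> H" "d (P g) = m"
      using parent_in_H[OF P] d_parent[OF P] Suc g_pos by (metis, metis Suc_inject)
    have "P g = P' g" using agree Suc by simp
    moreover have "key_at P m (P g) = key_at P' m (P g)" using Suc.IH PH Suc.prems by simp
    moreover have "inspection_index P (P g) = inspection_index P' (P g)" using index PH Suc.prems by simp
    ultimately show ?case by simp
  qed simp
  then show ?thesis unfolding half_edge_key_def key_def using index g by simp
qed

lemma leftmost_parents_leftmost_parent: "leftmost_parents leftmost_parent"
  unfolding leftmost_parents_def
proof (intro ballI impI)
  fix h g assume h: "h \<in> H" "0 < d h" and g: "g \<in> parent_candidates h"
  then obtain n where n: "d h = Suc n" using not0_implies_Suc by blast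
  have agree: "leftmost_parent x = leftmost_parent_upto n x" if "x \<in> H" "d x \<le> n" for x
    using leftmost_parent_upto_eq that by simp
  have key_eq: "half_edge_key leftmost_parent x = half_edge_key (leftmost_parent_upto n) x"
    if "x \<in> H" "d x \<le> n" for x
    using half_edge_key_agree[OF parent_choice_leftmost_parent agree] that by blast
  have "leftmost_parent h \<in> H" "d (leftmost_parent h) = n"
    using leftmost_parent_minimal(1)[OF h(1) n] n parent_candidates_def by auto
  moreover have "g \<in> H" "d g = n" using g n parent_candidates_def by auto
  ultimately show "half_edge_key leftmost_parent (leftmost_parent h) \<le> half_edge_key leftmost_parent g"
    using key_eq leftmost_parent_minimal(2)[OF h(1) n] g by simp
qed

lemma tree_out_ascends_if_geodesic:
  assumes geodesic: "Delta_in H \<sigma> \<alpha> r S = geodesic_in H \<sigma> \<alpha> r" and x: "tree_out x"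
  shows "d (\<alpha> x) = Suc (d x)"
proof -
  have xS: "x \<in> S" "pos x < pos (\<alpha> x)" and xH: "x \<in> H" using x S_subset_H tree_out_def by auto
  have "\<alpha> x \<in> Delta_in H \<sigma> \<alpha> r S" unfolding Delta_in_def using xS alpha_in_S alpha_alpha xH by simp
  then have "\<alpha> x \<in> geodesic_in H \<sigma> \<alpha> r" using geodesic by simp
  then have "d x < d (\<alpha> x)" unfolding geodesic_in_def using alpha_alpha xH by simp
  then show ?thesis using d_alpha_cases xH by fastforce
qed

text \<open>If S is the tree of a parent choice, a tree edge first visited at its far end forces the
  motion function to enter that far vertex through another such tree edge, farther from the root.\<close>

lemma tree_edge_descending_step:
  assumes P: "parent_choice P" and S_eq: "S = tree_edges P"
    and x: "x \<in> H" "tree_out x" "d (\<alpha> x) \<noteq> Suc (d x)"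
  obtains y where "y \<in> H" "tree_out y" "d (\<alpha> y) \<noteq> Suc (d y)" "d x < d y"
proof -
  obtain c where c: "c \<in> H" "0 < d c" "x = P c \<or> x = \<alpha> (P c)"
    using tree_out_S[OF x(2)] S_eq tree_edges_def by auto
  have "x \<noteq> P c"
    using x(3) alpha_parent_in_vertex[OF P c(1,2)] d_parent[OF P c(1,2)] d_vertex[OF c(1)] by auto
  then have xc: "x = \<alpha> (P c)" using c by simp
  then have xv: "x \<in> vertex c" using alpha_parent_in_vertex[OF P c(1,2)] by simp
  have x_pos: "0 < d x" using d_vertex c(1) xv c(2) by simp
  obtain e q where e: "e \<in> vertex x" "\<forall>y\<in>vertex x. pos e \<le> pos y"
    and q: "q \<in> S" "q \<in> vertex x" "\<sigma> q = e" "Suc (pos (\<alpha> q)) = pos e"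
    using vertex_entry[OF x(1) x_pos] by blast
  have qH: "q \<in> H" using q(1) S_subset_H by blast
  obtain c' where c': "c' \<in> H" "0 < d c'" "q = P c' \<or> q = \<alpha> (P c')" using q(1) S_eq tree_edges_def by auto
  have "q \<noteq> \<alpha> (P c')"
  proof
    assume q_eq: "q = \<alpha> (P c')"
    then have "c' \<in> vertex c"
      using alpha_parent_in_vertex[OF P c'(1,2)] q(2) xv vertex_eq vertex_sym by metis
    then have "q = x" using q_eq xc parent_vertex[OF P c(1)] by simp
    then have "pos (\<alpha> x) < pos x" using q(4) e(2) in_own_vertex by fastforce
    then show False using x(2) tree_out_def by simp
  qed
  then have q_parent: "q = P c'" using c' by simp
  have aqv: "\<alpha> q \<in> vertex c'" using alpha_parent_in_vertex[OF P c'(1,2)] q_parent by simp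
  have d_aq: "d (\<alpha> q) = Suc (d x)"
    using d_vertex[OF c'(1) aqv] d_parent[OF P c'(1,2)] q_parent d_vertex[OF x(1) q(2)] by simp
  have "tree_out (\<alpha> q)"
    using q(1,4) e(2) q(2) alpha_in_S alpha_alpha qH unfolding tree_out_def by fastforce
  moreover have "d (\<alpha> (\<alpha> q)) \<noteq> Suc (d (\<alpha> q))" using alpha_alpha[OF qH] d_aq d_vertex[OF x(1) q(2)] by simp
  ultimately show thesis using that alpha_in_H[OF qH] d_aq by simp
qed

lemma tree_out_ascends_if_tree_edges:
  assumes P: "parent_choice P" and S_eq: "S = tree_edges P" and x: "tree_out x"
  shows "d (\<alpha> x) = Suc (d x)"
proof -
  have "x \<in> H \<Longrightarrow> tree_out x \<Longrightarrow> d (\<alpha> x) = Suc (d x)" for x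
  proof (induction "Max (d ` H) - d x" arbitrary: x rule: less_induct)
    case less
    show ?case
    proof (rule ccontr)
      assume "d (\<alpha> x) \<noteq> Suc (d x)"
      then obtain y where "y \<in> H" "tree_out y" "d (\<alpha> y) \<noteq> Suc (d y)" "d x < d y"
        using tree_edge_descending_step[OF P S_eq less.prems] by blast
      moreover from this have "Max (d ` H) - d y < Max (d ` H) - d x" using d_le_Max by fastforce
      ultimately show False using less.hyps by blast
    qed
  qed
  then show ?thesis using x tree_out_S S_subset_H by blast
qed

end

context ascending_tree
begin

lemma parent_choice_alpha_entry: "parent_choice (\<lambda>h. \<alpha> (entry h))"
proof -
  have "\<alpha> (entry h) \<in> H \<and> \<alpha> (\<alpha> (entry h)) \<in> vertex h \<and> Suc (d (\<alpha> (entry h))) = d h"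
    if h: "h \<in> H" "0 < d h" for h
  proof -
    have qH: "entry h \<in> H" using entry_in_H[OF h] .
    have "Suc (d (\<alpha> (entry h))) = d (entry h)" using tree_in_descends[OF tree_in_entry[OF h]] by simp
    also have "\<dots> = d h" using d_vertex h entry_in_vertex[OF h] by simp
    finally show ?thesis using alpha_in_H qH alpha_alpha entry_in_vertex[OF h] by simp
  qed
  moreover have "\<alpha> (entry g) = \<alpha> (entry h)" if "h \<in> H" "g \<in> vertex h" for h g
    using entry_vertex that by simp
  ultimately show ?thesis unfolding parent_choice_def by blast
qed

lemma S_eq_tree_edges_alpha_entry: "S = tree_edges (\<lambda>h. \<alpha> (entry h))"
proof
  show "S \<subseteq> tree_edges (\<lambda>h. \<alpha> (entry h))"
  proof
    fix x assume xS: "x \<in> S"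
    have xH: "x \<in> H" using xS S_subset_H by blast
    consider "tree_in x" | "tree_out x" using tree_out_or_in xS by blast
    then show "x \<in> tree_edges (\<lambda>h. \<alpha> (entry h))"
    proof cases
      case 1
      have x_pos: "0 < d x" using tree_in_descends[OF 1] by simp
      have "entry x = x" using tree_in_eq_entry[OF xH x_pos in_own_vertex 1] by simp
      then have "x = \<alpha> (\<alpha> (entry x))" using alpha_alpha xH by simp
      then show ?thesis unfolding tree_edges_def using xH x_pos by blast
    next
      case 2
      have in_ax: "tree_in (\<alpha> x)" using tree_in_alpha_iff xS 2 by blast
      have axH: "\<alpha> x \<in> H" using alpha_in_H xH by blast
      have ax_pos: "0 < d (\<alpha> x)" using tree_in_descends[OF in_ax] by simp
      have "entry (\<alpha> x) = \<alpha> x" using tree_in_eq_entry[OF axH ax_pos in_own_vertex in_ax] by simp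
      then have "x = \<alpha> (entry (\<alpha> x))" using alpha_alpha xH by simp
      then show ?thesis unfolding tree_edges_def using axH ax_pos by blast
    qed
  qed
  show "tree_edges (\<lambda>h. \<alpha> (entry h)) \<subseteq> S"
  proof
    fix x assume "x \<in> tree_edges (\<lambda>h. \<alpha> (entry h))"
    then obtain c where c: "c \<in> H" "0 < d c" "x = \<alpha> (entry c) \<or> x = \<alpha> (\<alpha> (entry c))"
      unfolding tree_edges_def by blast
    have "entry c \<in> S" using tree_in_S[OF tree_in_entry[OF c(1,2)]] .
    then show "x \<in> S" using c(3) alpha_in_S by blast
  qed
qed

lemma leftmost_parents_alpha_entry_if_geodesic:
  assumes geodesic: "Delta_in H \<sigma> \<alpha> r S = geodesic_in H \<sigma> \<alpha> r"
  shows "leftmost_parents (\<lambda>h. \<alpha> (entry h))"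
proof -
  have in_S: "\<alpha> (entry h) \<in> S" if "h \<in> H" "0 < d h" for h
    using tree_in_entry[OF that] tree_in_S alpha_in_S by blast
  have "\<forall>h\<in>H. 0 < d h \<longrightarrow> (\<forall>g\<in>parent_candidates h. pos (\<alpha> (entry h)) \<le> pos g)"
  proof (intro ballI impI)
    fix h g assume h: "h \<in> H" "0 < d h" and g: "g \<in> parent_candidates h"
    have gg: "g \<in> H" "\<alpha> g \<in> vertex h" "Suc (d g) = d h" using g parent_candidates_def by auto
    have "\<alpha> g \<in> geodesic_in H \<sigma> \<alpha> r"
      unfolding geodesic_in_def using alpha_in_H alpha_alpha gg d_vertex[OF h(1) gg(2)] by simp
    then have ag_in: "\<alpha> g \<in> Delta_in H \<sigma> \<alpha> r S" using geodesic by simp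
    show "pos (\<alpha> (entry h)) \<le> pos g"
    proof (cases "g \<in> S")
      case True
      then have "\<alpha> g \<in> S" using alpha_in_S by blast
      then have "pos (\<alpha> (\<alpha> g)) < pos (\<alpha> g)" using ag_in unfolding Delta_in_def by blast
      then have "pos g < pos (\<alpha> g)" using alpha_alpha[OF gg(1)] by simp
      then have "tree_in (\<alpha> g)" using \<open>\<alpha> g \<in> S\<close> alpha_alpha gg unfolding tree_in_def by simp
      then have "\<alpha> g = entry h" using tree_in_eq_entry[OF h gg(2)] by simp
      then have "\<alpha> (entry h) = g" using alpha_alpha[OF gg(1)] by simp
      then show ?thesis by simp
    next
      case False
      then have "\<alpha> g \<notin> S" using alpha_in_S[of "\<alpha> g"] alpha_alpha gg(1) by auto
      then have "pos (\<alpha> g) < pos (\<alpha> (\<alpha> g))" using ag_in unfolding Delta_in_def by blast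
      then have "pos (\<alpha> g) < pos g" using alpha_alpha[OF gg(1)] by simp
      moreover have "pos (\<alpha> (entry h)) < pos (\<alpha> g)" using pos_in_entry_block[OF h gg(2)] by simp
      ultimately show ?thesis by simp
    qed
  qed
  then show ?thesis using leftmost_parents_iff[OF parent_choice_alpha_entry in_S] by simp
qed

lemma rightmost_bfs_tree_if_geodesic:
  assumes "Delta_in H \<sigma> \<alpha> r S = geodesic_in H \<sigma> \<alpha> r"
  shows "S = rightmost_bfs_tree H \<sigma> \<alpha> r"
  using rightmost_bfs_tree_eq_tree_edges[OF parent_choice_alpha_entry
      leftmost_parents_alpha_entry_if_geodesic[OF assms]] S_eq_tree_edges_alpha_entry by simp

lemma tree_in_iff_descends: "x \<in> S \<Longrightarrow> tree_in x \<longleftrightarrow> d (\<alpha> x) < d x"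
  using tree_in_descends tree_out_ascends tree_out_or_in tree_in_def tree_out_def by (metis lessI less_asym)

context
  fixes P assumes P: "parent_choice P" and S_eq: "S = tree_edges P" and leftmost: "leftmost_parents P"
begin

lemma parent_in_S: "h \<in> H \<Longrightarrow> 0 < d h \<Longrightarrow> P h \<in> S"
  using S_eq tree_edges_def by auto

text \<open>A non-tree edge is visited first at its end farther from the root: its nearer half-edge
  is a parent candidate of the far vertex, visited after the leftmost parent, hence after the
  whole block of the far vertex.\<close>

lemma pos_less_alpha_if_not_tree:
  assumes h: "h \<in> H" "h \<notin> S" "d (\<alpha> h) < d h"
  shows "pos h < pos (\<alpha> h)"
proof -
  have h_pos: "0 < d h" using h by simp
  have ahH: "\<alpha> h \<in> H" using alpha_in_H h by blast
  have d_ah: "Suc (d (\<alpha> h)) = d h" using d_alpha_cases h by fastforce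
  have "\<alpha> h \<in> parent_candidates h"
    unfolding parent_candidates_def using ahH alpha_alpha h in_own_vertex d_ah by simp
  moreover have "\<alpha> h \<noteq> P h"
    using alpha_alpha[OF h(1)] parent_in_S[OF h(1) h_pos] alpha_in_S h(2) by metis
  then have "pos (P h) \<noteq> pos (\<alpha> h)" using pos_inj parent_in_H[OF P h(1) h_pos] ahH by metis
  ultimately have P_before: "pos (P h) < pos (\<alpha> h)"
    using leftmost h(1) h_pos leftmost_parents_iff[OF P parent_in_S] by fastforce
  have P_entry: "\<alpha> (entry h) = P h"
    using alpha_parent_eq_entry[OF P parent_in_S h(1) h_pos] alpha_alpha parent_in_H[OF P h(1) h_pos] by metis
  have "\<not> pos (\<alpha> h) \<le> pos (entry h)"
  proof
    assume "pos (\<alpha> h) \<le> pos (entry h)"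
    then have "\<alpha> h \<in> vertex h \<or> d h < d (\<alpha> h)" using entry_block[OF h(1) h_pos ahH] P_before P_entry by simp
    then show False using d_vertex h d_ah by fastforce
  qed
  moreover have "pos h \<le> pos (entry h)" using pos_in_entry_block[OF h(1) h_pos in_own_vertex] by simp
  ultimately show ?thesis by simp
qed

lemma geodesic_if_leftmost_tree: "Delta_in H \<sigma> \<alpha> r S = geodesic_in H \<sigma> \<alpha> r"
proof (rule set_eqI)
  fix x
  show "x \<in> Delta_in H \<sigma> \<alpha> r S \<longleftrightarrow> x \<in> geodesic_in H \<sigma> \<alpha> r"
  proof (cases "x \<in> H")
    case False then show ?thesis unfolding Delta_in_def geodesic_in_def using S_subset_H by auto
  next
    case xH: True
    show ?thesis
    proof (cases "x \<in> S")
      case True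
      have "x \<in> Delta_in H \<sigma> \<alpha> r S \<longleftrightarrow> tree_in x" unfolding Delta_in_def tree_in_def using True by simp
      then show ?thesis unfolding geodesic_in_def using xH tree_in_iff_descends[OF True] by simp
    next
      case False
      have axS: "\<alpha> x \<notin> S" using False alpha_in_S alpha_alpha xH by metis
      have "x \<in> Delta_in H \<sigma> \<alpha> r S \<longleftrightarrow> pos x < pos (\<alpha> x)" unfolding Delta_in_def using False xH by simp
      moreover have "pos x < pos (\<alpha> x) \<longleftrightarrow> d (\<alpha> x) < d x"
      proof (cases "d (\<alpha> x) < d x")
        case True then show ?thesis using pos_less_alpha_if_not_tree[OF xH False] by simp
      next
        case far: False
        then have "d (\<alpha> (\<alpha> x)) < d (\<alpha> x)" using d_alpha_cases xH alpha_alpha by fastforce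
        then have "pos (\<alpha> x) < pos (\<alpha> (\<alpha> x))" using pos_less_alpha_if_not_tree alpha_in_H xH axS by blast
        then show ?thesis using alpha_alpha xH far by simp
      qed
      ultimately show ?thesis unfolding geodesic_in_def using xH by simp
    qed
  qed
qed

end

end

theorem (in bipartite_covered_map) geodesic_iff_rightmost_bfs_tree:
  "Delta_in H \<sigma> \<alpha> r S = geodesic_in H \<sigma> \<alpha> r \<longleftrightarrow> S = rightmost_bfs_tree H \<sigma> \<alpha> r"
proof
  assume geodesic: "Delta_in H \<sigma> \<alpha> r S = geodesic_in H \<sigma> \<alpha> r"
  interpret ascending_tree H \<sigma> \<alpha> r S
    by unfold_locales (rule tree_out_ascends_if_geodesic[OF geodesic])
  show "S = rightmost_bfs_tree H \<sigma> \<alpha> r" using rightmost_bfs_tree_if_geodesic[OF geodesic] .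
next
  assume "S = rightmost_bfs_tree H \<sigma> \<alpha> r"
  then have S_eq: "S = tree_edges leftmost_parent"
    using rightmost_bfs_tree_eq_tree_edges[OF parent_choice_leftmost_parent leftmost_parents_leftmost_parent]
    by simp
  interpret ascending_tree H \<sigma> \<alpha> r S
    by unfold_locales (rule tree_out_ascends_if_tree_edges[OF parent_choice_leftmost_parent S_eq])
  show "Delta_in H \<sigma> \<alpha> r S = geodesic_in H \<sigma> \<alpha> r"
    using geodesic_if_leftmost_tree[OF parent_choice_leftmost_parent S_eq leftmost_parents_leftmost_parent] .
qed

theorem mainTheorem15:
  fixes H :: "'a set" and \<sigma> \<alpha> :: "'a \<Rightarrow> 'a" and r :: 'a and S :: "'a set"
  assumes "covered_map H \<sigma> \<alpha> r S"
    and "bipartite_map H \<sigma> \<alpha>"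
  shows "Delta_in H \<sigma> \<alpha> r S = geodesic_in H \<sigma> \<alpha> r \<longleftrightarrow> S = rightmost_bfs_tree H \<sigma> \<alpha> r"
  using assms by (intro bipartite_covered_map.geodesic_iff_rightmost_bfs_tree bipartite_covered_map.intro)

end
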